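(* Let $G$ be a finitely generated group and $S$ a finite generating set. Then the Cayley graph $Cay(G,S)$ (equivalently $G$) is quasi-isometric to a tree if and only if there exist $i_0,k,m\in\mathbb{N}$ such that $G$ is $(i_0,k,m)$-chordal with respect to $S$.
   Context: $S^{\pm1}=S\cup S^{-1}\setminus\{e\}$; $Cay(G,S)$ has vertex set $G$, edges $\{g,gs\}$ ($s\in S^{\pm1}$), each edge of length 1. A relation $s_1\cdots s_n=e$ with $n>2$, $s_i\in S^{\pm1}$, is simple if $s_p\cdots s_q=e$ holds exactly when $(p,q)=(1,n)$. $G$ is $(i_0,k,m)$-chordal with respect to $S$ if for every simple relation $s_1\cdots s_n=e$ with $n\ge k$ there exist $1\le i\le i_0$, $i<j\le n$ and $s'_1,\dots,s'_r\in S^{\pm1}$ with $s_i\cdots s_j=s'_1\cdots s'_r$ and $r\le\min\{m,\,j-i,\,n-j+i-2\}$. *)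

theory Defs
  imports "HOL-Algebra.Group" "HOL-Algebra.Generated_Groups" Complex_Main
begin

definition sym_gens :: "('g, 'b) monoid_scheme \<Rightarrow> 'g set \<Rightarrow> 'g set" where
  "sym_gens G S = (S \<union> (\<lambda>s. inv\<^bsub>G\<^esub> s) ` S) - {\<one>\<^bsub>G\<^esub>}"

definition word_prod :: "('g, 'b) monoid_scheme \<Rightarrow> 'g list \<Rightarrow> 'g" where
  "word_prod G ws = foldr (\<lambda>a b. a \<otimes>\<^bsub>G\<^esub> b) ws \<one>\<^bsub>G\<^esub>"

text \<open>Subword s_p ... s_q (1-indexed, inclusive).\<close>
definition subword :: "'g list \<Rightarrow> nat \<Rightarrow> nat \<Rightarrow> 'g list" where
  "subword ss p q = take (Suc q - p) (drop (p - 1) ss)"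

text \<open>Path metric of Cay(G,S) restricted to the vertex set G (word metric).\<close>
definition cayley_dist :: "('g, 'b) monoid_scheme \<Rightarrow> 'g set \<Rightarrow> 'g \<Rightarrow> 'g \<Rightarrow> nat" where
  "cayley_dist G S g h =
     (LEAST n. \<exists>ws. length ws = n \<and> set ws \<subseteq> sym_gens G S \<and> g \<otimes>\<^bsub>G\<^esub> word_prod G ws = h)"

definition simple_relation :: "('g, 'b) monoid_scheme \<Rightarrow> 'g set \<Rightarrow> 'g list \<Rightarrow> bool" where
  "simple_relation G S ss \<longleftrightarrow>
     length ss > 2 \<and> set ss \<subseteq> sym_gens G S \<and> word_prod G ss = \<one>\<^bsub>G\<^esub> \<and>
     (\<forall>p q. 1 \<le> p \<and> p \<le> q \<and> q \<le> length ss \<longrightarrow>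
        (word_prod G (subword ss p q) = \<one>\<^bsub>G\<^esub> \<longleftrightarrow> (p, q) = (1, length ss)))"

text \<open>(i0,k,m)-chordality. The bound r \<le> n - j + i - 2 is written as r + j + 2 \<le> n + i
  to avoid truncated subtraction.\<close>
definition chordal :: "('g, 'b) monoid_scheme \<Rightarrow> 'g set \<Rightarrow> nat \<Rightarrow> nat \<Rightarrow> nat \<Rightarrow> bool" where
  "chordal G S i0 k m \<longleftrightarrow>
     (\<forall>ss. simple_relation G S ss \<and> length ss \<ge> k \<longrightarrow>
        (\<exists>i j ts. 1 \<le> i \<and> i \<le> i0 \<and> i < j \<and> j \<le> length ss \<and>
           set ts \<subseteq> sym_gens G S \<and>
           word_prod G (subword ss i j) = word_prod G ts \<and>
           length ts \<le> m \<and> length ts \<le> j - i \<and> length ts + j + 2 \<le> length ss + i))"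

text \<open>Simple graphs on a vertex set V with adjacency E; walks as vertex lists.\<close>
definition is_walk :: "'v set \<Rightarrow> ('v \<Rightarrow> 'v \<Rightarrow> bool) \<Rightarrow> 'v list \<Rightarrow> bool" where
  "is_walk V E xs \<longleftrightarrow> xs \<noteq> [] \<and> set xs \<subseteq> V \<and> (\<forall>i. Suc i < length xs \<longrightarrow> E (xs ! i) (xs ! Suc i))"

definition is_tree :: "'v set \<Rightarrow> ('v \<Rightarrow> 'v \<Rightarrow> bool) \<Rightarrow> bool" where
  "is_tree V E \<longleftrightarrow> V \<noteq> {} \<and>
     (\<forall>u v. E u v \<longrightarrow> u \<in> V \<and> v \<in> V \<and> u \<noteq> v \<and> E v u) \<and>
     (\<forall>u\<in>V. \<forall>v\<in>V. \<exists>!xs. is_walk V E xs \<and> distinct xs \<and> hd xs = u \<and> last xs = v)"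

definition graph_dist :: "'v set \<Rightarrow> ('v \<Rightarrow> 'v \<Rightarrow> bool) \<Rightarrow> 'v \<Rightarrow> 'v \<Rightarrow> nat" where
  "graph_dist V E u v = (LEAST n. \<exists>xs. is_walk V E xs \<and> hd xs = u \<and> last xs = v \<and> length xs = Suc n)"

definition quasi_isometric :: "'a set \<Rightarrow> ('a \<Rightarrow> 'a \<Rightarrow> real) \<Rightarrow> 'c set \<Rightarrow> ('c \<Rightarrow> 'c \<Rightarrow> real) \<Rightarrow> bool" where
  "quasi_isometric A dA B dB \<longleftrightarrow>
     (\<exists>f L C. f ` A \<subseteq> B \<and> L \<ge> 1 \<and> C \<ge> 0 \<and>
        (\<forall>x\<in>A. \<forall>y\<in>A. dA x y / L - C \<le> dB (f x) (f y) \<and> dB (f x) (f y) \<le> L * dA x y + C) \<and>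
        (\<forall>z\<in>B. \<exists>x\<in>A. dB z (f x) \<le> C))"

text \<open>Cay(G,S) is quasi-isometric to a tree. Since G is countable, trees may be taken
  with vertices in nat.\<close>
definition qi_to_tree :: "('g, 'b) monoid_scheme \<Rightarrow> 'g set \<Rightarrow> bool" where
  "qi_to_tree G S \<longleftrightarrow>
     (\<exists>(V :: nat set) E. is_tree V E \<and>
        quasi_isometric (carrier G) (\<lambda>g h. real (cayley_dist G S g h))
                        V (\<lambda>u v. real (graph_dist V E u v)))"

end

theory Submission
  imports Defs "HOL-Library.Countable_Set"
begin

text \<open>
  If \<open>f\<close> is a quasi-isometry from the Cayley graph to a tree, read a long simple relation as a closed
  walk from \<open>\<one>\<close>. Either its first \<open>2 R\<close> letters do not form a geodesic, which is a chord at the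
  start, or the image of the rest of the walk must cross the tree geodesic between the images of
  the endpoints of this segment again, which brings the walk back within bounded distance of its
  \<open>R\<close>-th vertex: a chord starting at position \<open>R + 1\<close>.

  Conversely, chordality gives Manning's bottleneck property. If a walk from \<open>x\<close> to \<open>y\<close> avoided
  a large ball about a point \<open>w\<close> of a geodesic from \<open>x\<close> to \<open>y\<close>, loop erasure would produce an
  embedded cycle through \<open>w\<close> that is geodesic near \<open>w\<close> and otherwise stays outside the ball; such a
  cycle has no short chord starting close to \<open>w\<close>. A graph with the bottleneck property is
  quasi-isometric to the tree whose vertices are the pieces of the spheres about a base point, two
  points of a sphere lying in the same piece when they can be joined outside the open ball bounded
  by the sphere, and whose edges join each piece to the piece of the predecessors of its points.
\<close>

section \<open>Walks\<close>

definition walk_betw :: "'v set \<Rightarrow> ('v \<Rightarrow> 'v \<Rightarrow> bool) \<Rightarrow> 'v list \<Rightarrow> 'v \<Rightarrow> 'v \<Rightarrow> bool" where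
  "walk_betw V E xs u v \<longleftrightarrow> is_walk V E xs \<and> hd xs = u \<and> last xs = v"

lemma set_tl_subset: "set (tl xs) \<subseteq> set xs"
  by (cases xs) auto

lemma is_walk_Nil [simp]: "\<not> is_walk V E []"
  by (simp add: is_walk_def)

lemma is_walk_singleton [simp]: "is_walk V E [x] \<longleftrightarrow> x \<in> V"
  by (simp add: is_walk_def)

lemma is_walk_Cons_Cons [simp]:
  "is_walk V E (x # y # xs) \<longleftrightarrow> x \<in> V \<and> E x y \<and> is_walk V E (y # xs)"
  unfolding is_walk_def by (auto simp: less_Suc_eq_0_disj)

lemma is_walk_set: "is_walk V E xs \<Longrightarrow> set xs \<subseteq> V"
  by (simp add: is_walk_def)

lemma is_walk_append:
  "is_walk V E xs \<Longrightarrow> is_walk V E ys \<Longrightarrow> last xs = hd ys \<Longrightarrow> is_walk V E (xs @ tl ys)"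
proof (induction xs rule: induct_list012)
  case (2 x) then show ?case by (cases ys) auto
qed auto

lemma is_walk_appendD1: "is_walk V E (xs @ ys) \<Longrightarrow> xs \<noteq> [] \<Longrightarrow> is_walk V E xs"
proof (induction xs rule: induct_list012)
  case (2 x) then show ?case by (cases ys) auto
qed auto

lemma is_walk_appendD2: "is_walk V E (xs @ ys) \<Longrightarrow> ys \<noteq> [] \<Longrightarrow> is_walk V E ys"
proof (induction xs)
  case (Cons x xs) then show ?case by (cases xs; cases ys) auto
qed simp

lemma is_walk_take: "is_walk V E xs \<Longrightarrow> 0 < l \<Longrightarrow> is_walk V E (take l xs)"
  by (metis append_take_drop_id is_walk_appendD1 is_walk_Nil take_eq_Nil gr_implies_not0)

lemma is_walk_drop: "is_walk V E xs \<Longrightarrow> i < length xs \<Longrightarrow> is_walk V E (drop i xs)"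
  by (metis append_take_drop_id is_walk_appendD2 drop_eq_Nil not_le)

lemma is_walk_rev:
  assumes sym: "\<And>u v. E u v \<Longrightarrow> E v u"
  shows "is_walk V E xs \<Longrightarrow> is_walk V E (rev xs)"
proof (induction xs rule: induct_list012)
  case (3 x y zs)
  have "is_walk V E (rev (y # zs) @ tl [y, x])"
    using 3 sym is_walk_set[OF "3.prems"] by (intro is_walk_append) auto
  then show ?case by simp
qed auto

lemma walk_betw_nonempty: "walk_betw V E xs u v \<Longrightarrow> xs \<noteq> []"
  by (auto simp: walk_betw_def)

lemma walk_betw_set: "walk_betw V E xs u v \<Longrightarrow> set xs \<subseteq> V"
  using is_walk_set unfolding walk_betw_def by blast

lemma walk_betw_endpoints: "walk_betw V E xs u v \<Longrightarrow> u \<in> set xs \<and> v \<in> set xs"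
  unfolding walk_betw_def using is_walk_Nil hd_in_set last_in_set by metis

lemma walk_betw_in: "walk_betw V E xs u v \<Longrightarrow> u \<in> V \<and> v \<in> V"
  using walk_betw_endpoints walk_betw_set by fast

lemma walk_betw_singleton [simp]: "walk_betw V E [x] u v \<longleftrightarrow> x \<in> V \<and> u = x \<and> v = x"
  by (auto simp: walk_betw_def)

lemma walk_betw_edge: "x \<in> V \<Longrightarrow> y \<in> V \<Longrightarrow> E x y \<Longrightarrow> walk_betw V E [x, y] x y"
  by (simp add: walk_betw_def)

lemma walk_betw_Cons: "walk_betw V E xs y v \<Longrightarrow> E x y \<Longrightarrow> x \<in> V \<Longrightarrow> walk_betw V E (x # xs) x v"
  by (cases xs) (auto simp: walk_betw_def)

lemma walk_betw_ConsD: "walk_betw V E (x # y # zs) u v \<Longrightarrow> walk_betw V E (y # zs) y v"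
  by (simp add: walk_betw_def)

lemma walk_betw_append:
  assumes "walk_betw V E xs u v" "walk_betw V E ys v w"
  shows "walk_betw V E (xs @ tl ys) u w"
proof -
  have ne: "xs \<noteq> []" "ys \<noteq> []" using assms by (auto dest: walk_betw_nonempty)
  then have "last (xs @ tl ys) = last ys"
    using assms by (cases ys) (auto simp: last_append walk_betw_def)
  then show ?thesis using assms ne by (auto simp: walk_betw_def intro: is_walk_append)
qed

lemma walk_betw_rev:
  "(\<And>u v. E u v \<Longrightarrow> E v u) \<Longrightarrow> walk_betw V E xs u v \<Longrightarrow> walk_betw V E (rev xs) v u"
  unfolding walk_betw_def by (auto simp: is_walk_rev hd_rev last_rev)

lemma walk_betw_take:
  "walk_betw V E xs u v \<Longrightarrow> i < length xs \<Longrightarrow> walk_betw V E (take (Suc i) xs) u (xs ! i)"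
  unfolding walk_betw_def by (metis is_walk_take hd_take last_snoc take_Suc_conv_app_nth zero_less_Suc)

lemma walk_betw_drop:
  "walk_betw V E xs u v \<Longrightarrow> i < length xs \<Longrightarrow> walk_betw V E (drop i xs) (xs ! i) v"
  unfolding walk_betw_def by (auto simp: is_walk_drop hd_drop_conv_nth)

lemma walk_betw_loop_distinct: "walk_betw V E ys u u \<Longrightarrow> distinct ys \<Longrightarrow> ys = [u]"
  by (cases ys rule: rev_cases) (auto simp: walk_betw_def hd_append split: if_splits)

lemma walk_betw_distinct:
  "walk_betw V E xs u v \<Longrightarrow> \<exists>ys. walk_betw V E ys u v \<and> distinct ys \<and> set ys \<subseteq> set xs"
proof (induction "length xs" arbitrary: xs rule: less_induct)
  case less
  show ?case
  proof (cases "distinct xs")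
    case False
    then obtain as y bs cs where xs: "xs = as @ [y] @ bs @ [y] @ cs"
      using not_distinct_decomp by blast
    have w: "is_walk V E xs" using less.prems by (simp add: walk_betw_def)
    have "is_walk V E (as @ [y])" "is_walk V E ([y] @ cs)"
      using w xs is_walk_appendD1[of V E "as @ [y]"] is_walk_appendD2[of V E "as @ [y] @ bs"] by auto
    then have "is_walk V E (as @ [y] @ cs)" using is_walk_append by fastforce
    then have "walk_betw V E (as @ [y] @ cs) u v" using less.prems xs unfolding walk_betw_def
      by (cases as; cases cs) auto
    then show ?thesis using less.hyps[of "as @ [y] @ cs"] xs by fastforce
  qed (use less.prems in blast)
qed

lemma walk_betw_distinct_interior:
  assumes xs: "walk_betw V E xs v u" and "v \<noteq> u" and B: "\<And>z. z \<in> set xs \<Longrightarrow> z \<in> B \<Longrightarrow> z = u \<or> z = v"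
  obtains mid where "walk_betw V E (v # mid @ [u]) v u" "distinct (v # mid @ [u])" "set mid \<inter> B = {}"
proof -
  obtain ys where ys: "walk_betw V E ys v u" "distinct ys" "set ys \<subseteq> set xs"
    using walk_betw_distinct[OF xs] by blast
  obtain qs where "ys = v # qs" using ys(1) by (cases ys) (auto simp: walk_betw_def)
  moreover have "qs \<noteq> []" "last qs = u" using ys(1) \<open>v \<noteq> u\<close> \<open>ys = v # qs\<close> by (auto simp: walk_betw_def)
  ultimately have "ys = v # butlast qs @ [u]" by (metis append_butlast_last_id)
  moreover have "set (butlast qs) \<inter> B = {}"
    using B ys(2,3) \<open>ys = v # butlast qs @ [u]\<close> by fastforce
  ultimately show ?thesis using that ys by metis
qed

lemma nth_append_segments:
  assumes "length xs = Suc d" "length zs = Suc d"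
  shows "t \<le> d \<Longrightarrow> (xs @ ys @ zs) ! t = xs ! t"
    and "d < t \<Longrightarrow> t + d < length (xs @ ys @ zs) - 1 \<Longrightarrow> (xs @ ys @ zs) ! t \<in> set ys"
    and "t \<le> d \<Longrightarrow> (xs @ ys @ zs) ! (length (xs @ ys @ zs) - 1 - t) = zs ! (d - t)"
proof -
  show "t \<le> d \<Longrightarrow> (xs @ ys @ zs) ! t = xs ! t" using assms by (simp add: nth_append)
  show "(xs @ ys @ zs) ! t \<in> set ys" if "d < t" "t + d < length (xs @ ys @ zs) - 1"
  proof -
    have "t = length xs + (t - Suc d)" "t - Suc d < length ys" using that assms by simp_all
    then show ?thesis by (metis nth_append_length_plus nth_append nth_mem)
  qed
  show "(xs @ ys @ zs) ! (length (xs @ ys @ zs) - 1 - t) = zs ! (d - t)" if "t \<le> d"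
  proof -
    have "length (xs @ ys @ zs) - 1 - t = length (xs @ ys) + (d - t)" using assms that by simp
    then show ?thesis by (simp only: append.assoc[symmetric] nth_append_length_plus)
  qed
qed

section \<open>Connected graphs\<close>

locale connected_graph =
  fixes V :: "'v set" and E :: "'v \<Rightarrow> 'v \<Rightarrow> bool"
  assumes sym: "E u v \<Longrightarrow> E v u"
    and edge_in: "E u v \<Longrightarrow> u \<in> V"
    and connected: "u \<in> V \<Longrightarrow> v \<in> V \<Longrightarrow> \<exists>xs. walk_betw V E xs u v"
begin

abbreviation gdist where "gdist \<equiv> graph_dist V E"

lemma gdist_le_walk: "walk_betw V E xs u v \<Longrightarrow> gdist u v \<le> length xs - 1"
  unfolding graph_dist_def walk_betw_def
  by (rule Least_le) (metis Suc_pred' is_walk_Nil length_greater_0_conv)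

lemma shortest_walk_exists:
  assumes "u \<in> V" "v \<in> V"
  shows "\<exists>xs. walk_betw V E xs u v \<and> length xs = Suc (gdist u v)"
proof -
  obtain xs where "walk_betw V E xs u v" using connected assms by blast
  then have "\<exists>n xs. is_walk V E xs \<and> hd xs = u \<and> last xs = v \<and> length xs = Suc n"
    unfolding walk_betw_def by (metis Suc_pred' is_walk_Nil length_greater_0_conv)
  from LeastI_ex[OF this] show ?thesis unfolding graph_dist_def walk_betw_def by blast
qed

lemma gdist_self [simp]: "u \<in> V \<Longrightarrow> gdist u u = 0"
  using gdist_le_walk[of "[u]" u u] by simp

lemma gdist_eq_0D: "u \<in> V \<Longrightarrow> v \<in> V \<Longrightarrow> gdist u v = 0 \<Longrightarrow> u = v"
  using shortest_walk_exists[of u v] by (auto simp: walk_betw_def length_Suc_conv)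

lemma edge_vertices: "E u v \<Longrightarrow> u \<in> V \<and> v \<in> V"
  using edge_in sym by blast

lemma gdist_edge: "E u v \<Longrightarrow> gdist u v \<le> 1"
  using gdist_le_walk[OF walk_betw_edge] edge_vertices by fastforce

lemma gdist_commute: "u \<in> V \<Longrightarrow> v \<in> V \<Longrightarrow> gdist u v = gdist v u"
proof -
  have le: "gdist a b \<le> gdist b a" if ab: "a \<in> V" "b \<in> V" for a b
  proof -
    obtain xs where "walk_betw V E xs b a" "length xs = Suc (gdist b a)"
      using shortest_walk_exists ab by blast
    then show ?thesis using gdist_le_walk[OF walk_betw_rev[OF sym]] by fastforce
  qed
  show "u \<in> V \<Longrightarrow> v \<in> V \<Longrightarrow> ?thesis" using le[of u v] le[of v u] by simp
qed

lemma gdist_triangle: "u \<in> V \<Longrightarrow> v \<in> V \<Longrightarrow> w \<in> V \<Longrightarrow> gdist u w \<le> gdist u v + gdist v w"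
proof -
  assume "u \<in> V" "v \<in> V" "w \<in> V"
  then obtain xs ys where "walk_betw V E xs u v" "length xs = Suc (gdist u v)"
    and "walk_betw V E ys v w" "length ys = Suc (gdist v w)"
    using shortest_walk_exists by meson
  then show ?thesis using gdist_le_walk[OF walk_betw_append] by fastforce
qed

lemma gdist_chain_le:
  assumes "\<And>t. a \<le> t \<Longrightarrow> t < b \<Longrightarrow> gdist (h t) (h (Suc t)) \<le> 1"
    and "\<And>t. a \<le> t \<Longrightarrow> t \<le> b \<Longrightarrow> h t \<in> V" and "a \<le> b"
  shows "gdist (h a) (h b) \<le> b - a"
  using assms
proof (induction b)
  case (Suc b)
  show ?case
  proof (cases "a = Suc b")
    case False
    then have ab: "a \<le> b" using Suc.prems(3) by simp
    have "gdist (h a) (h b) \<le> b - a" using ab Suc.prems by (intro Suc.IH) auto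
    moreover have "gdist (h b) (h (Suc b)) \<le> 1" using ab Suc.prems(1) by simp
    moreover have "gdist (h a) (h (Suc b)) \<le> gdist (h a) (h b) + gdist (h b) (h (Suc b))"
      using ab Suc.prems(2) by (intro gdist_triangle) auto
    ultimately show ?thesis using ab by linarith
  qed (use Suc.prems in simp)
qed simp

lemma shortest_walk_distinct:
  assumes "walk_betw V E xs u v" "length xs = Suc (gdist u v)"
  shows "distinct xs"
proof (rule ccontr)
  assume "\<not> distinct xs"
  obtain ys where ys: "walk_betw V E ys u v" "distinct ys" "set ys \<subseteq> set xs"
    using walk_betw_distinct[OF assms(1)] by blast
  have "length ys = card (set ys)" using ys(2) by (simp add: distinct_card)
  also have "\<dots> \<le> card (set xs)" using ys(3) by (simp add: card_mono)
  also have "\<dots> < length xs"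
    using \<open>\<not> distinct xs\<close> card_distinct[of xs] card_length[of xs] by linarith
  finally show False
    using gdist_le_walk[OF ys(1)] walk_betw_nonempty[OF ys(1)] assms(2) by (cases ys) auto
qed

lemma shortest_walk_gdist:
  assumes xs: "walk_betw V E xs u v" "length xs = Suc (gdist u v)" and ij: "i \<le> j" "j < length xs"
  shows "gdist (xs ! i) (xs ! j) = j - i" and "gdist (xs ! j) (xs ! i) = j - i"
proof -
  have uv: "u \<in> V" "v \<in> V" using walk_betw_in[OF xs(1)] by auto
  have xi: "xs ! i \<in> V" "xs ! j \<in> V" using walk_betw_set[OF xs(1)] ij by auto
  have "gdist u (xs ! i) \<le> i"
    using gdist_le_walk[OF walk_betw_take[OF xs(1)]] ij by fastforce
  moreover have "gdist (xs ! i) (xs ! j) \<le> j - i"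
    using gdist_le_walk[OF walk_betw_drop[OF walk_betw_take[OF xs(1), of j]]] ij by fastforce
  moreover have "gdist (xs ! j) v \<le> length xs - 1 - j"
    using gdist_le_walk[OF walk_betw_drop[OF xs(1)]] ij by fastforce
  moreover have "gdist u v \<le> gdist u (xs ! i) + gdist (xs ! i) (xs ! j) + gdist (xs ! j) v"
    using gdist_triangle[OF uv(1) xi(1) uv(2)] gdist_triangle[OF xi(1) xi(2) uv(2)] by simp
  ultimately show "gdist (xs ! i) (xs ! j) = j - i" using xs(2) ij by linarith
  then show "gdist (xs ! j) (xs ! i) = j - i" using gdist_commute[OF xi] by simp
qed

lemma shortest_walk_gdist_ends:
  assumes xs: "walk_betw V E xs u v" "length xs = Suc (gdist u v)" and i: "i < length xs"
  shows "gdist u (xs ! i) = i" "gdist (xs ! i) v = gdist u v - i"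
proof -
  have "u = xs ! 0" "v = xs ! gdist u v"
    using xs walk_betw_nonempty[OF xs(1)] by (auto simp: walk_betw_def hd_conv_nth last_conv_nth)
  then show "gdist u (xs ! i) = i" "gdist (xs ! i) v = gdist u v - i"
    using shortest_walk_gdist(1)[OF xs, of 0 i] shortest_walk_gdist(1)[OF xs, of i "gdist u v"] xs(2) i
    by simp_all
qed

lemma gdist_chain_geodesic:
  assumes "\<And>t. a \<le> t \<Longrightarrow> t < b \<Longrightarrow> gdist (h t) (h (Suc t)) \<le> 1"
    and "\<And>t. a \<le> t \<Longrightarrow> t \<le> b \<Longrightarrow> h t \<in> V" and "gdist (h a) (h b) = b - a"
    and "a \<le> s" "s \<le> t" "t \<le> b"
  shows "gdist (h s) (h t) = t - s"
proof -
  have "gdist (h a) (h s) \<le> s - a" "gdist (h s) (h t) \<le> t - s" "gdist (h t) (h b) \<le> b - t"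
    using assms by (intro gdist_chain_le; simp)+
  moreover have "gdist (h a) (h b) \<le> gdist (h a) (h s) + gdist (h s) (h t) + gdist (h t) (h b)"
    using gdist_triangle[of "h a" "h s" "h b"] gdist_triangle[of "h s" "h t" "h b"] assms(2,4-6)
    by fastforce
  ultimately show ?thesis using assms(3-6) by linarith
qed

definition between :: "'v \<Rightarrow> 'v \<Rightarrow> 'v \<Rightarrow> bool" where
  "between a p c \<longleftrightarrow> p \<in> V \<and> gdist a p + gdist p c = gdist a c"

lemma between_commute: "between a p c \<Longrightarrow> a \<in> V \<Longrightarrow> c \<in> V \<Longrightarrow> between c p a"
  unfolding between_def using gdist_commute by auto

lemma between_shortest_walk:
  assumes "walk_betw V E xs a b" "length xs = Suc (gdist a b)" "p \<in> set xs"
  shows "between a p b"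
proof -
  obtain i where "i < length xs" "p = xs ! i" using assms(3) by (metis in_set_conv_nth)
  then show ?thesis
    using shortest_walk_gdist_ends[OF assms(1,2)] walk_betw_set[OF assms(1)] assms(2,3)
    by (auto simp: between_def)
qed

lemma between_shortest_walk_exists:
  assumes "between x w y" "x \<in> V" "y \<in> V"
  obtains \<gamma> where "walk_betw V E \<gamma> x y" "length \<gamma> = Suc (gdist x y)" "\<gamma> ! gdist x w = w"
proof -
  have w: "w \<in> V" using assms(1) by (simp add: between_def)
  obtain g1 g2 where g1: "walk_betw V E g1 x w" "length g1 = Suc (gdist x w)"
    and g2: "walk_betw V E g2 w y" "length g2 = Suc (gdist w y)"
    using shortest_walk_exists assms(2,3) w by meson
  have "(g1 @ tl g2) ! gdist x w = w"
    using g1 walk_betw_nonempty[OF g1(1)] by (simp add: nth_append walk_betw_def last_conv_nth)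
  moreover have "length (g1 @ tl g2) = Suc (gdist x y)" using g1 g2 assms(1) by (simp add: between_def)
  ultimately show ?thesis using that walk_betw_append[OF g1(1) g2(1)] by blast
qed

end

section \<open>Trees\<close>

locale tree = connected_graph +
  assumes tree: "is_tree V E"
begin

lemma distinct_walk_unique:
  assumes "walk_betw V E xs u v" "distinct xs" "walk_betw V E ys u v" "distinct ys"
  shows "xs = ys"
proof -
  have "\<exists>!xs. is_walk V E xs \<and> distinct xs \<and> hd xs = u \<and> last xs = v"
    using tree walk_betw_in[OF assms(1)] unfolding is_tree_def by blast
  then show ?thesis using assms unfolding walk_betw_def by blast
qed

lemma between_on_walk:
  assumes b: "between a p c" and W: "walk_betw V E W a c"
  shows "p \<in> set W"
proof -
  have V: "a \<in> V" "c \<in> V" "p \<in> V" using walk_betw_in[OF W] b by (auto simp: between_def)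
  obtain P1 P2 where P1: "walk_betw V E P1 a p" "length P1 = Suc (gdist a p)"
    and P2: "walk_betw V E P2 p c" "length P2 = Suc (gdist p c)"
    using shortest_walk_exists V by meson
  have P: "walk_betw V E (P1 @ tl P2) a c" by (rule walk_betw_append[OF P1(1) P2(1)])
  have "length (P1 @ tl P2) = Suc (gdist a c)" using P1 P2 b by (simp add: between_def)
  then have dP: "distinct (P1 @ tl P2)" by (rule shortest_walk_distinct[OF P])
  obtain ys where ys: "walk_betw V E ys a c" "distinct ys" "set ys \<subseteq> set W"
    using walk_betw_distinct[OF W] by blast
  have "ys = P1 @ tl P2" using distinct_walk_unique[OF ys(1,2) P dP] .
  moreover have "p \<in> set P1" using walk_betw_endpoints[OF P1(1)] by simp
  ultimately show ?thesis using ys(3) by auto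
qed

lemma between_split:
  assumes "between a p c" "a \<in> V" "b \<in> V" "c \<in> V"
  shows "between a p b \<or> between b p c"
proof -
  obtain W1 W2 where W1: "walk_betw V E W1 a b" "length W1 = Suc (gdist a b)"
    and W2: "walk_betw V E W2 b c" "length W2 = Suc (gdist b c)"
    using shortest_walk_exists assms by meson
  have "p \<in> set (W1 @ tl W2)" by (rule between_on_walk[OF assms(1) walk_betw_append[OF W1(1) W2(1)]])
  then have "p \<in> set W1 \<or> p \<in> set W2" using walk_betw_nonempty[OF W2(1)] by (cases W2) auto
  then show ?thesis using between_shortest_walk W1 W2 by blast
qed

lemma between_near_chain:
  assumes "\<And>i. i \<le> K \<Longrightarrow> z i \<in> V" "\<And>i. i < K \<Longrightarrow> gdist (z i) (z (Suc i)) \<le> J"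
    and "between (z 0) p (z K)"
  shows "\<exists>i\<le>K. gdist (z i) p \<le> J"
  using assms
proof (induction K)
  case (Suc K)
  then have "between (z 0) p (z K) \<or> between (z K) p (z (Suc K))"
    using between_split by simp
  then show ?case
  proof
    assume "between (z K) p (z (Suc K))"
    then have "gdist (z K) p \<le> J" using Suc.prems(2)[of K] by (simp add: between_def)
    then show ?thesis by (intro exI[of _ K]) auto
  qed (use Suc in \<open>metis le_SucI less_SucI\<close>)
qed (simp add: between_def)

text \<open>Every point of the geodesic from \<open>z 0\<close> to \<open>z K\<close> is within \<open>J\<close> of the first or of the
  second part of the chain; the last point near the first part is \<open>p\<close>.\<close>
lemma geodesic_crossing:
  assumes z: "\<And>i. i \<le> K \<Longrightarrow> z i \<in> V" "\<And>i. i < K \<Longrightarrow> gdist (z i) (z (Suc i)) \<le> J"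
    and "M \<le> K"
  shows "\<exists>p s1 s2. between (z 0) p (z K) \<and> s1 \<le> M \<and> M \<le> s2 \<and> s2 \<le> K \<and>
           gdist (z s1) p \<le> J \<and> gdist (z s2) p \<le> Suc J"
proof -
  define N where "N = gdist (z 0) (z K)"
  obtain P where P: "walk_betw V E P (z 0) (z K)" "length P = Suc N"
    using shortest_walk_exists z(1) N_def by blast
  have btw: "between (z 0) (P ! t) (z K)" if "t \<le> N" for t
    using between_shortest_walk[OF P(1)] P(2) that N_def by simp
  have PV: "P ! t \<in> V" if "t \<le> N" for t using btw[OF that] by (simp add: between_def)
  define Lo where "Lo t \<longleftrightarrow> (\<exists>s\<le>M. gdist (z s) (P ! t) \<le> J)" for t
  define Hi where "Hi t \<longleftrightarrow> (\<exists>s. M \<le> s \<and> s \<le> K \<and> gdist (z s) (P ! t) \<le> J)" for t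
  have LoHi: "Lo t \<or> Hi t" if "t \<le> N" for t
    using between_near_chain[OF z btw[OF that]] unfolding Lo_def Hi_def by (meson nat_le_linear)
  have "P ! 0 = z 0" "P ! N = z K"
    using P walk_betw_nonempty[OF P(1)] by (auto simp: walk_betw_def hd_conv_nth last_conv_nth)
  then have Lo0: "Lo 0" and HiN: "Hi N" using z(1) \<open>M \<le> K\<close> unfolding Lo_def Hi_def by force+
  define t where "t = Max {t. t \<le> N \<and> Lo t}"
  have fin: "finite {t. t \<le> N \<and> Lo t}" by simp
  have t: "t \<le> N" "Lo t" using Max_in[OF fin] Lo0 unfolding t_def by blast+
  have "\<exists>s. M \<le> s \<and> s \<le> K \<and> gdist (z s) (P ! t) \<le> Suc J"
  proof (cases "t = N")
    case True then show ?thesis using HiN unfolding Hi_def by force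
  next
    case False
    then have "Suc t \<le> N" "\<not> Lo (Suc t)" using t Max_ge[OF fin, of "Suc t"] unfolding t_def by fastforce+
    then obtain s where s: "M \<le> s" "s \<le> K" "gdist (z s) (P ! Suc t) \<le> J"
      using LoHi unfolding Hi_def by blast
    have "gdist (P ! Suc t) (P ! t) = 1"
      using shortest_walk_gdist(2)[OF P(1), of t "Suc t"] \<open>Suc t \<le> N\<close> P(2) N_def by simp
    then have "gdist (z s) (P ! t) \<le> Suc J"
      using gdist_triangle[of "z s" "P ! Suc t" "P ! t"] s z(1) PV \<open>Suc t \<le> N\<close> t(1) by fastforce
    then show ?thesis using s by blast
  qed
  then show ?thesis using t btw unfolding Lo_def by blast
qed

end

lemma is_tree_imp_tree: "is_tree V E \<Longrightarrow> tree V E"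
proof -
  assume "is_tree V E"
  then have "connected_graph V E" unfolding connected_graph_def is_tree_def walk_betw_def by metis
  then show ?thesis using \<open>is_tree V E\<close> by (simp add: tree_def tree_axioms_def)
qed

section \<open>Trees given by a parent function\<close>

locale parent_tree =
  fixes V :: "'v set" and lev :: "'v \<Rightarrow> nat" and par :: "'v \<Rightarrow> 'v" and root :: 'v
  assumes root_in: "root \<in> V" and lev_root: "lev root = 0" and par_root: "par root = root"
    and lev_eq_0D: "u \<in> V \<Longrightarrow> lev u = 0 \<Longrightarrow> u = root"
    and par_in: "u \<in> V \<Longrightarrow> par u \<in> V"
    and lev_par: "u \<in> V \<Longrightarrow> 0 < lev u \<Longrightarrow> Suc (lev (par u)) = lev u"
begin

definition parent_edge :: "'v \<Rightarrow> 'v \<Rightarrow> bool" where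
  "parent_edge u v \<longleftrightarrow> u \<in> V \<and> v \<in> V \<and> ((0 < lev u \<and> v = par u) \<or> (0 < lev v \<and> u = par v))"

abbreviation ancestor :: "'v \<Rightarrow> nat \<Rightarrow> 'v" where "ancestor u k \<equiv> (par ^^ k) u"

definition below :: "'v \<Rightarrow> 'v \<Rightarrow> bool" where "below w u \<longleftrightarrow> (\<exists>k. ancestor w k = u)"

lemma ancestor_in: "u \<in> V \<Longrightarrow> ancestor u k \<in> V"
  by (induction k) (auto simp: par_in)

lemma lev_ancestor: "u \<in> V \<Longrightarrow> lev (ancestor u k) = lev u - k"
proof (induction k)
  case (Suc k)
  have a: "ancestor u k \<in> V" using ancestor_in Suc by blast
  show ?case
  proof (cases "lev (ancestor u k) = 0")
    case True
    then have "ancestor u k = root" using lev_eq_0D a by blast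
    then show ?thesis using True Suc lev_root par_root by simp
  qed (use lev_par[OF a] Suc in simp)
qed simp

lemma ancestor_Suc: "ancestor u (Suc k) = ancestor (par u) k"
  by (simp add: funpow_Suc_right del: funpow.simps)

lemma parent_edge_sym: "parent_edge u v \<Longrightarrow> parent_edge v u"
  unfolding parent_edge_def by blast

lemma walk_to_root: "u \<in> V \<Longrightarrow> \<exists>xs. walk_betw V parent_edge xs u root"
proof (induction "lev u" arbitrary: u)
  case 0 then show ?case using lev_eq_0D by (intro exI[of _ "[u]"]) simp
next
  case (Suc n)
  then have "par u \<in> V" "lev (par u) = n" "parent_edge u (par u)"
    using par_in lev_par[of u] by (auto simp: parent_edge_def)
  then show ?case using Suc by (blast intro: walk_betw_Cons)
qed

lemma connected_graph_parent_edge: "connected_graph V parent_edge"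
proof
  show "parent_edge u v \<Longrightarrow> parent_edge v u" for u v by (rule parent_edge_sym)
  show "parent_edge u v \<Longrightarrow> u \<in> V" for u v by (simp add: parent_edge_def)
  fix u v assume "u \<in> V" "v \<in> V"
  then obtain xs ys where xs: "walk_betw V parent_edge xs u root"
    and ys: "walk_betw V parent_edge ys v root"
    using walk_to_root by meson
  have "walk_betw V parent_edge (rev ys) root v" using walk_betw_rev[OF _ ys] parent_edge_sym by blast
  then show "\<exists>xs. walk_betw V parent_edge xs u v" using walk_betw_append[OF xs] by blast
qed

fun descending :: "'v list \<Rightarrow> bool" where
  "descending (x # y # zs) \<longleftrightarrow> 0 < lev y \<and> x = par y \<and> descending (y # zs)"
| "descending _ \<longleftrightarrow> True"

lemma distinct_walk_descending:
  "is_walk V parent_edge (x # y # zs) \<Longrightarrow> distinct (x # y # zs) \<Longrightarrow> 0 < lev y \<Longrightarrow> x = par y \<Longrightarrow>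
     descending (x # y # zs)"
proof (induction zs arbitrary: x y)
  case (Cons z zs)
  then have "0 < lev z \<and> y = par z" by (auto simp: parent_edge_def)
  then show ?case using Cons.IH[of y z] Cons.prems by simp
qed simp

lemma descending_ancestor:
  "descending xs \<Longrightarrow> xs \<noteq> [] \<Longrightarrow> set xs \<subseteq> V \<Longrightarrow>
     hd xs = ancestor (last xs) (length xs - 1) \<and> lev (last xs) = lev (hd xs) + (length xs - 1)"
proof (induction xs rule: descending.induct)
  case (1 x y zs)
  then show ?case using lev_par[of y] by simp
qed auto

lemma walk_enters_below:
  "is_walk V parent_edge xs \<Longrightarrow> below (last xs) u \<Longrightarrow> \<not> below (hd xs) u \<Longrightarrow> u \<in> set xs"
proof (induction xs rule: induct_list012)
  case (3 x y zs)
  show ?case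
  proof (cases "below y u")
    case True
    then obtain k where k: "ancestor y k = u" by (auto simp: below_def)
    have "(0 < lev x \<and> y = par x) \<or> (0 < lev y \<and> x = par y)"
      using "3.prems"(1) by (simp add: parent_edge_def)
    then show ?thesis
    proof (elim disjE conjE)
      assume "0 < lev x" "y = par x"
      then have "ancestor x (Suc k) = u" using k ancestor_Suc[of k x] by simp
      then have "below x u" unfolding below_def by blast
      then show ?thesis using "3.prems"(3) by simp
    next
      assume "0 < lev y" "x = par y"
      then show ?thesis
        using k ancestor_Suc[of _ y] "3.prems"(3) unfolding below_def by (cases k) auto
    qed
  qed (use 3 in simp)
qed simp_all

lemma not_below_par: "u \<in> V \<Longrightarrow> 0 < lev u \<Longrightarrow> \<not> below (par u) u"
proof
  assume u: "u \<in> V" "0 < lev u" and "below (par u) u"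
  then obtain k where "ancestor (par u) k = u" by (auto simp: below_def)
  then show False using lev_ancestor[OF par_in[OF u(1)], of k] lev_par[OF u] by simp
qed

lemma distinct_walk_down:
  assumes w: "walk_betw V parent_edge (u # z # zs) u v" "distinct (u # z # zs)"
    and e: "0 < lev z" "u = par z"
  shows "descending (z # zs)" "below v u"
proof -
  have d: "descending (u # z # zs)"
    using distinct_walk_descending[OF _ w(2) e] w(1) by (simp add: walk_betw_def)
  then show "descending (z # zs)" by simp
  have "u = ancestor v (length (u # z # zs) - 1)"
    using descending_ancestor[OF d _ walk_betw_set[OF w(1)]] w(1) by (simp add: walk_betw_def)
  then show "below v u" unfolding below_def by (metis (no_types))
qed

text \<open>A distinct walk leaving \<open>u\<close> downwards ends below \<open>u\<close>; one leaving \<open>u\<close> upwards would have to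
  re-enter the subtree of \<open>u\<close> through \<open>u\<close> itself.\<close>
lemma distinct_walks_down_up:
  assumes w: "walk_betw V parent_edge (u # z # zs) u v" "distinct (u # z # zs)" "0 < lev z" "u = par z"
    and w': "walk_betw V parent_edge (u # z' # zs') u v" "distinct (u # z' # zs')" "0 < lev u" "z' = par u"
  shows False
proof -
  have "is_walk V parent_edge (z' # zs')" using walk_betw_ConsD[OF w'(1)] by (simp add: walk_betw_def)
  moreover have "below (last (z' # zs')) u" using distinct_walk_down(2)[OF w] w'(1) by (simp add: walk_betw_def)
  moreover have "\<not> below (hd (z' # zs')) u"
    using not_below_par[of u] walk_betw_in[OF w(1)] w'(3,4) by simp
  ultimately have "u \<in> set (z' # zs')" by (rule walk_enters_below)
  then show False using w'(2) by simp
qed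

lemma distinct_walks_second_vertex:
  assumes wx: "walk_betw V parent_edge (u # x # xs) u v" and dx: "distinct (u # x # xs)"
    and wy: "walk_betw V parent_edge (u # y # ys) u v" and dy: "distinct (u # y # ys)"
  shows "x = y"
proof -
  have sx: "set (u # x # xs) \<subseteq> V" and sy: "set (u # y # ys) \<subseteq> V"
    using walk_betw_set[OF wx] walk_betw_set[OF wy] by simp_all
  have lx: "last (x # xs) = v" and ly: "last (y # ys) = v" using wx wy by (auto simp: walk_betw_def)
  have "(0 < lev u \<and> x = par u) \<or> (0 < lev x \<and> u = par x)"
    and "(0 < lev u \<and> y = par u) \<or> (0 < lev y \<and> u = par y)"
    using wx wy by (auto simp: walk_betw_def parent_edge_def)
  then consider "0 < lev u" "x = par u" "y = par u"
    | "0 < lev u" "x = par u" "0 < lev y" "u = par y"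
    | "0 < lev x" "u = par x" "0 < lev u" "y = par u"
    | "0 < lev x" "u = par x" "0 < lev y" "u = par y"
    by (elim disjE conjE) metis+
  then show ?thesis
  proof cases
    case 2 then show ?thesis using distinct_walks_down_up[OF wy dy _ _ wx dx] by blast
  next
    case 3 then show ?thesis using distinct_walks_down_up[OF wx dx _ _ wy dy] by blast
  next
    case 4
    then have "descending (x # xs)" "descending (y # ys)"
      using distinct_walk_down(1)[OF wx dx] distinct_walk_down(1)[OF wy dy] by blast+
    then have "x = ancestor v (length xs) \<and> lev v = lev x + length xs"
      "y = ancestor v (length ys) \<and> lev v = lev y + length ys"
      using descending_ancestor[of "x # xs"] descending_ancestor[of "y # ys"] sx sy lx ly by auto
    moreover have "lev x = lev y" using lev_par[of x] lev_par[of y] 4 sx sy by auto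
    ultimately show ?thesis by (metis add_left_cancel)
  qed simp
qed

lemma distinct_walk_unique:
  "walk_betw V parent_edge xs u v \<Longrightarrow> distinct xs \<Longrightarrow> walk_betw V parent_edge ys u v \<Longrightarrow> distinct ys \<Longrightarrow>
     xs = ys"
proof (induction xs arbitrary: u ys)
  case (Cons x xs)
  then have xu: "x = u" by (simp add: walk_betw_def)
  show ?case
  proof (cases "xs = [] \<or> tl ys = []")
    case True
    then have "u = v" using Cons.prems xu by (cases ys) (auto simp: walk_betw_def)
    then show ?thesis using walk_betw_loop_distinct Cons.prems by metis
  next
    case False
    then obtain x1 xs' y1 ys' where xs: "xs = x1 # xs'" and ys: "ys = u # y1 # ys'"
      using Cons.prems by (cases xs; cases ys; cases "tl ys") (auto simp: walk_betw_def)
    have wx: "walk_betw V parent_edge (u # x1 # xs') u v" and dx: "distinct (u # x1 # xs')"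
      using Cons.prems xs xu by simp_all
    have wy: "walk_betw V parent_edge (u # y1 # ys') u v" and dy: "distinct (u # y1 # ys')"
      using Cons.prems ys by simp_all
    have "x1 = y1" using distinct_walks_second_vertex[OF wx dx wy dy] .
    then have "x1 # xs' = y1 # ys'"
      using Cons.IH[of x1 "y1 # ys'"] walk_betw_ConsD[OF wx] walk_betw_ConsD[OF wy] dx dy xs by simp
    then show ?thesis using xs ys xu by simp
  qed
qed (simp add: walk_betw_def)

lemma is_tree_parent_edge: "is_tree V parent_edge"
  unfolding is_tree_def
proof (intro conjI allI impI ballI)
  show "V \<noteq> {}" using root_in by blast
  fix u v
  assume "parent_edge u v"
  then show "u \<in> V" "v \<in> V" "parent_edge v u" "u \<noteq> v"
    using lev_par[of u] lev_par[of v] by (auto simp: parent_edge_def)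
next
  fix u v assume "u \<in> V" "v \<in> V"
  then obtain xs where "walk_betw V parent_edge xs u v"
    using connected_graph.connected[OF connected_graph_parent_edge] by blast
  then obtain ys where "walk_betw V parent_edge ys u v" "distinct ys"
    using walk_betw_distinct by metis
  then show "\<exists>!xs. is_walk V parent_edge xs \<and> distinct xs \<and> hd xs = u \<and> last xs = v"
    using distinct_walk_unique unfolding walk_betw_def by blast
qed

end

section \<open>Quasi-isometries between graphs\<close>

lemma quasi_isometric_cong:
  assumes "\<And>x y. x \<in> A \<Longrightarrow> y \<in> A \<Longrightarrow> dA x y = dA' x y"
  shows "quasi_isometric A dA B dB \<longleftrightarrow> quasi_isometric A dA' B dB"
  unfolding quasi_isometric_def using assms by auto

lemma quasi_isometric_natI:
  fixes dA :: "'a \<Rightarrow> 'a \<Rightarrow> nat" and dB :: "'b \<Rightarrow> 'b \<Rightarrow> nat" and C :: nat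
  assumes "f ` A \<subseteq> B"
    and upper: "\<And>x y. x \<in> A \<Longrightarrow> y \<in> A \<Longrightarrow> dB (f x) (f y) \<le> C * dA x y + C"
    and lower: "\<And>x y. x \<in> A \<Longrightarrow> y \<in> A \<Longrightarrow> dA x y \<le> C * dB (f x) (f y) + C"
    and "\<And>z. z \<in> B \<Longrightarrow> \<exists>x\<in>A. dB z (f x) \<le> C"
  shows "quasi_isometric A (\<lambda>x y. real (dA x y)) B (\<lambda>u v. real (dB u v))"
  unfolding quasi_isometric_def
proof (intro exI conjI ballI)
  fix x y assume xy: "x \<in> A" "y \<in> A"
  have "real (dA x y) \<le> real C * real (dB (f x) (f y)) + real C"
    using lower[OF xy] by (simp only: of_nat_mult[symmetric] of_nat_add[symmetric] of_nat_le_iff)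
  also have "\<dots> \<le> (real (dB (f x) (f y)) + real C) * (real C + 1)"
  proof -
    have "0 \<le> real C * real C + real (dB (f x) (f y))" by simp
    then show ?thesis by (simp add: algebra_simps)
  qed
  finally have "real (dA x y) / (real C + 1) \<le> real (dB (f x) (f y)) + real C"
    by (simp add: pos_divide_le_eq)
  then show "real (dA x y) / (real C + 1) - real C \<le> real (dB (f x) (f y))" by simp
  have "real (dB (f x) (f y)) \<le> real C * real (dA x y) + real C"
    using upper[OF xy] by (simp only: of_nat_mult[symmetric] of_nat_add[symmetric] of_nat_le_iff)
  then show "real (dB (f x) (f y)) \<le> (real C + 1) * real (dA x y) + real C"
    by (simp add: algebra_simps)
qed (use assms(1,4) in auto)

lemma quasi_isometric_natD:
  fixes dA :: "'a \<Rightarrow> 'a \<Rightarrow> nat" and dB :: "'b \<Rightarrow> 'b \<Rightarrow> nat"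
  assumes "quasi_isometric A (\<lambda>x y. real (dA x y)) B (\<lambda>u v. real (dB u v))"
  obtains f and C :: nat where "f ` A \<subseteq> B"
    and "\<And>x y. x \<in> A \<Longrightarrow> y \<in> A \<Longrightarrow> dB (f x) (f y) \<le> C * dA x y + C"
    and "\<And>x y. x \<in> A \<Longrightarrow> y \<in> A \<Longrightarrow> dA x y \<le> C * dB (f x) (f y) + C"
proof -
  obtain f L K where f: "f ` A \<subseteq> B" and L: "1 \<le> L" and K: "0 \<le> K"
    and bounds: "\<And>x y. x \<in> A \<Longrightarrow> y \<in> A \<Longrightarrow>
      real (dA x y) / L - K \<le> real (dB (f x) (f y)) \<and> real (dB (f x) (f y)) \<le> L * real (dA x y) + K"
    using assms unfolding quasi_isometric_def by blast
  define C where "C = nat \<lceil>L * (1 + K)\<rceil>"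
  have LKC: "L + L * K \<le> real C" using real_nat_ceiling_ge[of "L * (1 + K)"]
    unfolding C_def by (simp add: algebra_simps)
  have LK: "0 \<le> L * K" "K \<le> L * K" using L K by (simp_all add: mult_right_mono[of 1 L K, simplified])
  show ?thesis
  proof (rule that[OF f])
    fix x y assume xy: "x \<in> A" "y \<in> A"
    have "L * real (dA x y) \<le> real C * real (dA x y)"
      using LKC LK by (intro mult_right_mono) auto
    then have "real (dB (f x) (f y)) \<le> real C * real (dA x y) + real C"
      using bounds[OF xy] LKC LK L by linarith
    then show "dB (f x) (f y) \<le> C * dA x y + C"
      by (simp only: of_nat_mult[symmetric] of_nat_add[symmetric] of_nat_le_iff)
    have "real (dA x y) / L \<le> real (dB (f x) (f y)) + K" using bounds[OF xy] by simp
    then have "real (dA x y) \<le> (real (dB (f x) (f y)) + K) * L"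
      using L by (simp add: pos_divide_le_eq)
    moreover have "L * real (dB (f x) (f y)) \<le> real C * real (dB (f x) (f y))"
      using LKC LK by (intro mult_right_mono) auto
    ultimately have "real (dA x y) \<le> real C * real (dB (f x) (f y)) + real C"
      using LKC LK L by (simp add: algebra_simps)
    then show "dA x y \<le> C * dB (f x) (f y) + C"
      by (simp only: of_nat_mult[symmetric] of_nat_add[symmetric] of_nat_le_iff)
  qed
qed

section \<open>Graphs quasi-isometric to trees\<close>

locale graph_qi_tree = X: connected_graph V E + T: tree VT ET
  for V :: "'a set" and E and VT :: "'b set" and ET +
  fixes f :: "'a \<Rightarrow> 'b" and C :: nat
  assumes maps_to: "f ` V \<subseteq> VT"
    and upper: "x \<in> V \<Longrightarrow> y \<in> V \<Longrightarrow> T.gdist (f x) (f y) \<le> C * X.gdist x y + C"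
    and lower: "x \<in> V \<Longrightarrow> y \<in> V \<Longrightarrow> X.gdist x y \<le> C * T.gdist (f x) (f y) + C"
begin

lemma gdist_image_step: "x \<in> V \<Longrightarrow> y \<in> V \<Longrightarrow> X.gdist x y \<le> 1 \<Longrightarrow> T.gdist (f x) (f y) \<le> 2 * C"
  using upper[of x y] mult_le_mono2[of "X.gdist x y" 1 C] by linarith

text \<open>The image path of a geodesic segment crosses the tree geodesic between the images of its
  endpoints near images of vertices from both halves; these vertices are then close in the graph,
  hence close to the midpoint.\<close>
lemma midpoint_near_tree_geodesic:
  assumes g: "\<And>t. t \<le> 2 * R \<Longrightarrow> g t \<in> V" "\<And>t. t < 2 * R \<Longrightarrow> X.gdist (g t) (g (Suc t)) \<le> 1"
    and geo: "X.gdist (g 0) (g (2 * R)) = 2 * R"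
  obtains p where "T.between (f (g 0)) p (f (g (2 * R)))"
    "T.gdist (f (g R)) p \<le> C * (C * (4 * C + 1) + C) + 3 * C"
proof -
  define z where "z t = f (g t)" for t
  have zV: "z t \<in> VT" if "t \<le> 2 * R" for t using maps_to g(1)[OF that] unfolding z_def by blast
  obtain p s1 s2 where p: "T.between (z 0) p (z (2 * R))" and s: "s1 \<le> R" "R \<le> s2" "s2 \<le> 2 * R"
    and near: "T.gdist (z s1) p \<le> 2 * C" "T.gdist (z s2) p \<le> Suc (2 * C)"
    using T.geodesic_crossing[of "2 * R" z "2 * C" R] zV gdist_image_step g unfolding z_def by auto
  have pV: "p \<in> VT" using p by (simp add: T.between_def)
  have V: "z s1 \<in> VT" "z s2 \<in> VT" "z R \<in> VT" "g s1 \<in> V" "g s2 \<in> V" "g R \<in> V"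
    using zV g(1) s by simp_all
  have "T.gdist (z s1) (z s2) \<le> T.gdist (z s1) p + T.gdist (z s2) p"
    using T.gdist_triangle[OF V(1) pV V(2)] T.gdist_commute[OF pV V(2)] by simp
  then have "T.gdist (z s1) (z s2) \<le> 4 * C + 1" using near by simp
  then have "X.gdist (g s1) (g s2) \<le> C * (4 * C + 1) + C"
    using lower[OF V(4,5)] unfolding z_def by (meson add_le_mono1 mult_le_mono2 order_trans)
  moreover have "X.gdist (g R) (g s1) \<le> X.gdist (g s1) (g s2)"
    using X.gdist_chain_geodesic[of 0 "2 * R" g] g geo s X.gdist_commute[OF V(6,4)] by simp
  ultimately have "T.gdist (z R) (z s1) \<le> C * (C * (4 * C + 1) + C) + C"
    using upper[OF V(6,4)] unfolding z_def by (meson add_le_mono1 mult_le_mono2 order_trans)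
  then have "T.gdist (z R) p \<le> C * (C * (4 * C + 1) + C) + 3 * C"
    using T.gdist_triangle[OF V(3,1) pV] near by simp
  then show ?thesis using that p unfolding z_def by blast
qed

definition return_bound :: nat where
  "return_bound = C * (C * (C * (4 * C + 1) + C) + 5 * C) + C"

text \<open>The tree geodesic between the images of the endpoints of the geodesic segment must be crossed
  again by the image of the rest of the closed walk.\<close>
lemma closed_walk_returns:
  assumes g: "\<And>t. t \<le> n \<Longrightarrow> g t \<in> V" "\<And>t. t < n \<Longrightarrow> X.gdist (g t) (g (Suc t)) \<le> 1"
    and closed: "g n = g 0" and R: "2 * R \<le> n" and geo: "X.gdist (g 0) (g (2 * R)) = 2 * R"
  shows "\<exists>j. 2 * R \<le> j \<and> j \<le> n \<and> X.gdist (g R) (g j) \<le> return_bound"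
proof -
  obtain p where p: "T.between (f (g 0)) p (f (g (2 * R)))"
    and pR: "T.gdist (f (g R)) p \<le> C * (C * (4 * C + 1) + C) + 3 * C"
    using midpoint_near_tree_geodesic[of R g] g R geo by auto
  have pV: "p \<in> VT" and fV: "\<And>t. t \<le> n \<Longrightarrow> f (g t) \<in> VT"
    using p maps_to g(1) by (auto simp: T.between_def)
  have "T.between (f (g (2 * R + 0))) p (f (g (2 * R + (n - 2 * R))))"
    using T.between_commute[OF p] fV R closed by simp
  then obtain u where u: "u \<le> n - 2 * R" "T.gdist (f (g (2 * R + u))) p \<le> 2 * C"
    using T.between_near_chain[of "n - 2 * R" "\<lambda>u. f (g (2 * R + u))" "2 * C" p] fV gdist_image_step g R
    by auto
  define j where "j = 2 * R + u"
  have j: "f (g j) \<in> VT" "g j \<in> V" "j \<le> n" using fV g(1) u R unfolding j_def by simp_all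
  have "T.gdist (f (g R)) (f (g j)) \<le> T.gdist (f (g R)) p + T.gdist (f (g j)) p"
    using T.gdist_triangle[OF fV pV j(1)] T.gdist_commute[OF pV j(1)] R by simp
  then have "T.gdist (f (g R)) (f (g j)) \<le> C * (C * (4 * C + 1) + C) + 5 * C"
    using pR u(2) unfolding j_def by simp
  then have "C * T.gdist (f (g R)) (f (g j)) + C \<le> return_bound"
    unfolding return_bound_def by simp
  then have "X.gdist (g R) (g j) \<le> return_bound"
    using lower[OF g(1)[of R] j(2)] R by linarith
  then show ?thesis using j(3) by (intro exI[of _ j]) (simp add: j_def)
qed

end

section \<open>Manning's bottleneck property\<close>

locale bottleneck_graph = connected_graph V E for V :: "'v set" and E +
  fixes root :: 'v and \<Delta> :: nat
  assumes root_in: "root \<in> V" and countable_V: "countable V"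
    and bottleneck: "between x w y \<Longrightarrow> walk_betw V E xs x y \<Longrightarrow> \<exists>p\<in>set xs. gdist p w \<le> \<Delta>"
begin

abbreviation lv :: "'v \<Rightarrow> nat" where "lv x \<equiv> gdist root x"

definition sphere_rel :: "'v \<Rightarrow> 'v \<Rightarrow> bool" where
  "sphere_rel x y \<longleftrightarrow> x \<in> V \<and> y \<in> V \<and> lv x = lv y \<and>
     (\<exists>xs. walk_betw V E xs x y \<and> (\<forall>z\<in>set xs. lv x \<le> lv z))"

lemma sphere_rel_in: "sphere_rel x y \<Longrightarrow> x \<in> V \<and> y \<in> V"
  by (simp add: sphere_rel_def)

lemma sphere_rel_refl: "x \<in> V \<Longrightarrow> sphere_rel x x"
  unfolding sphere_rel_def by (intro conjI exI[of _ "[x]"]) auto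

lemma sphere_rel_sym: "sphere_rel x y \<Longrightarrow> sphere_rel y x"
proof -
  assume s: "sphere_rel x y"
  then obtain xs where xs: "walk_betw V E xs x y" "\<forall>z\<in>set xs. lv x \<le> lv z"
    unfolding sphere_rel_def by blast
  have "walk_betw V E (rev xs) y x" using walk_betw_rev[OF sym xs(1)] .
  then show ?thesis using xs(2) s unfolding sphere_rel_def by auto
qed

lemma sphere_rel_trans: "sphere_rel x y \<Longrightarrow> sphere_rel y z \<Longrightarrow> sphere_rel x z"
proof -
  assume s: "sphere_rel x y" "sphere_rel y z"
  then obtain xs ys where xs: "walk_betw V E xs x y" "\<forall>z\<in>set xs. lv x \<le> lv z"
    and ys: "walk_betw V E ys y z" "\<forall>z\<in>set ys. lv y \<le> lv z"
    unfolding sphere_rel_def by blast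
  have "walk_betw V E (xs @ tl ys) x z" using walk_betw_append[OF xs(1) ys(1)] .
  moreover have "\<forall>z\<in>set (xs @ tl ys). lv x \<le> lv z"
    using xs(2) ys(2) s(1) unfolding sphere_rel_def by (cases ys) auto
  ultimately show ?thesis using s unfolding sphere_rel_def by auto
qed

lemma sphere_rel_edge: "E x y \<Longrightarrow> lv x = lv y \<Longrightarrow> sphere_rel x y"
proof -
  assume "E x y" "lv x = lv y"
  moreover have "x \<in> V" "y \<in> V" using edge_vertices[OF \<open>E x y\<close>] by auto
  ultimately show ?thesis
    unfolding sphere_rel_def using walk_betw_edge by (intro conjI exI[of _ "[x, y]"]) auto
qed

text \<open>Take \<open>w\<close> on a geodesic from \<open>root\<close> to \<open>x\<close> at distance \<open>\<Delta> + 1\<close> from \<open>x\<close>. The walk from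
  \<open>root\<close> to \<open>y\<close> along a geodesic and then to \<open>x\<close> outside the ball passes within \<open>\<Delta>\<close> of \<open>w\<close>,
  necessarily on the geodesic part, close to its end \<open>y\<close>.\<close>
lemma sphere_rel_gdist: "sphere_rel x y \<Longrightarrow> gdist x y \<le> 4 * \<Delta> + 2"
proof -
  assume s: "sphere_rel x y"
  define n where "n = lv x"
  have V: "x \<in> V" "y \<in> V" and ny: "lv y = n" using s by (auto simp: sphere_rel_def n_def)
  obtain P where P: "walk_betw V E P x y" and P_lv: "\<forall>z\<in>set P. n \<le> lv z"
    using s unfolding sphere_rel_def n_def by blast
  show ?thesis
  proof (cases "n \<le> \<Delta> + 1")
    case True
    then show ?thesis
      using gdist_triangle[OF V(1) root_in V(2)] gdist_commute[OF V(1) root_in] n_def ny by simp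
  next
    case False
    obtain gx where gx: "walk_betw V E gx root x" "length gx = Suc n"
      using shortest_walk_exists root_in V n_def by blast
    obtain gy where gy: "walk_betw V E gy root y" "length gy = Suc n"
      using shortest_walk_exists root_in V ny by blast
    define w where "w = gx ! (n - \<Delta> - 1)"
    have wV: "w \<in> V" using walk_betw_set[OF gx(1)] gx(2) unfolding w_def by auto
    have lw: "lv w = n - \<Delta> - 1" and dwx: "gdist w x = \<Delta> + 1"
      using shortest_walk_gdist_ends[OF gx(1), of "n - \<Delta> - 1"] gx(2) False n_def w_def by auto
    have "between root w x" using lw dwx False n_def wV by (simp add: between_def)
    moreover have "walk_betw V E (gy @ tl (rev P)) root x"
      by (rule walk_betw_append[OF gy(1) walk_betw_rev[OF sym P]])
    ultimately obtain p where p: "p \<in> set (gy @ tl (rev P))" "gdist p w \<le> \<Delta>"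
      using bottleneck by blast
    have pV: "p \<in> V"
      using p(1) walk_betw_set[OF gy(1)] walk_betw_set[OF P] set_tl_subset[of "rev P"] by auto
    have "lv p \<le> lv w + gdist w p" using gdist_triangle[OF root_in wV pV] .
    then have "lv p < n" using lw p(2) gdist_commute[OF wV pV] False by simp
    then have "p \<notin> set P" using P_lv by fastforce
    then have "p \<in> set gy" using p(1) set_tl_subset[of "rev P"] by auto
    then obtain s where s: "s < Suc n" "p = gy ! s" using gy(2) by (metis in_set_conv_nth)
    have "lv p = s" "gdist p y = n - s" using shortest_walk_gdist_ends[OF gy(1)] gy(2) s ny by auto
    moreover have "lv w \<le> lv p + gdist p w" using gdist_triangle[OF root_in pV wV] .
    ultimately have "gdist p y \<le> 2 * \<Delta> + 1" using lw p(2) False by simp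
    moreover have "gdist x y \<le> gdist x w + (gdist w p + gdist p y)"
      using gdist_triangle[OF V(1) wV V(2)] gdist_triangle[OF wV pV V(2)] by simp
    moreover have "gdist x w = \<Delta> + 1" "gdist w p \<le> \<Delta>"
      using dwx gdist_commute[OF V(1) wV] p(2) gdist_commute[OF wV pV] by simp_all
    ultimately show ?thesis by linarith
  qed
qed

lemma lv_edge_le: "E x y \<Longrightarrow> lv y \<le> Suc (lv x)"
  using gdist_triangle[of root x y] gdist_edge[of x y] edge_vertices[of x y] root_in by fastforce

definition pred :: "'v \<Rightarrow> 'v" where "pred x = (SOME y. E x y \<and> Suc (lv y) = lv x)"

lemma pred_spec: assumes "x \<in> V" "0 < lv x" shows "E x (pred x)" "Suc (lv (pred x)) = lv x"
proof -
  obtain g where g: "walk_betw V E g root x" "length g = Suc (lv x)"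
    using shortest_walk_exists root_in assms(1) by blast
  define y where "y = g ! (lv x - 1)"
  have "\<forall>i<lv x. E (g ! i) (g ! Suc i)" using g unfolding walk_betw_def is_walk_def by simp
  moreover have "lv x - 1 < lv x" using assms(2) by simp
  ultimately have "E y (g ! Suc (lv x - 1))" unfolding y_def by blast
  moreover have "g ! Suc (lv x - 1) = x"
    using g assms(2) walk_betw_nonempty[OF g(1)] by (auto simp: walk_betw_def last_conv_nth)
  moreover have "lv y = lv x - 1"
    using shortest_walk_gdist_ends(1)[OF g, of "lv x - 1"] g(2) unfolding y_def by simp
  ultimately have "\<exists>y. E x y \<and> Suc (lv y) = lv x" using assms(2) sym by (intro exI[of _ y]) simp
  then have "E x (pred x) \<and> Suc (lv (pred x)) = lv x" unfolding pred_def by (rule someI_ex)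
  then show "E x (pred x)" "Suc (lv (pred x)) = lv x" by simp_all
qed

lemma pred_in: "x \<in> V \<Longrightarrow> 0 < lv x \<Longrightarrow> pred x \<in> V"
  using pred_spec edge_vertices by blast

lemma sphere_rel_down:
  assumes s: "sphere_rel x x'" and y: "E x y" "Suc (lv y) = lv x" and y': "E x' y'" "Suc (lv y') = lv x'"
  shows "sphere_rel y y'"
proof -
  obtain P where P: "walk_betw V E P x x'" "\<forall>z\<in>set P. lv x \<le> lv z"
    using s unfolding sphere_rel_def by auto
  have V: "y \<in> V" "x' \<in> V" "y' \<in> V" using edge_vertices y y' by auto
  have "walk_betw V E ((y # P) @ tl [x', y']) y y'"
    using walk_betw_Cons[OF P(1) sym[OF y(1)] V(1)] walk_betw_edge[where E = E, OF V(2,3) y'(1)]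
    by (rule walk_betw_append)
  moreover have "\<forall>z\<in>set ((y # P) @ tl [x', y']). lv y \<le> lv z"
    using P(2) y y' s by (auto simp: sphere_rel_def)
  moreover have "lv y = lv y'" using y y' s by (simp add: sphere_rel_def)
  ultimately show ?thesis using V unfolding sphere_rel_def by blast
qed

text \<open>The tree has the classes of \<open>sphere_rel\<close> as vertices; they are numbered by \<open>to_nat_on\<close>
  because \<open>qi_to_tree\<close> asks for a tree on \<open>nat\<close>.\<close>
definition node :: "'v \<Rightarrow> nat" where "node x = to_nat_on V (SOME y. sphere_rel x y)"

lemma node_eq_iff: "x \<in> V \<Longrightarrow> y \<in> V \<Longrightarrow> node x = node y \<longleftrightarrow> sphere_rel x y"
proof -
  have rep: "sphere_rel x (SOME y. sphere_rel x y)" if "x \<in> V" for x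
    using sphere_rel_refl[OF that] by (rule someI)
  have repV: "(SOME y. sphere_rel x y) \<in> V" if "x \<in> V" for x
    using sphere_rel_in[OF rep[OF that]] by simp
  assume xy: "x \<in> V" "y \<in> V"
  show ?thesis
  proof
    assume "node x = node y"
    then have "(SOME z. sphere_rel x z) = (SOME z. sphere_rel y z)"
      using repV xy countable_V unfolding node_def by simp
    then show "sphere_rel x y" using rep xy sphere_rel_sym sphere_rel_trans by metis
  next
    assume "sphere_rel x y"
    then have "sphere_rel x = sphere_rel y" using sphere_rel_sym sphere_rel_trans by blast
    then show "node x = node y" unfolding node_def by simp
  qed
qed

abbreviation VT :: "nat set" where "VT \<equiv> node ` V"

definition tree_lev :: "nat \<Rightarrow> nat" where "tree_lev u = lv (inv_into V node u)"

definition tree_par :: "nat \<Rightarrow> nat" where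
  "tree_par u = (if lv (inv_into V node u) = 0 then u else node (pred (inv_into V node u)))"

lemma sphere_rel_inv_into_node: "x \<in> V \<Longrightarrow> sphere_rel (inv_into V node (node x)) x"
  using node_eq_iff inv_into_into[of "node x" node V] f_inv_into_f[of "node x" node V] by auto

lemma tree_lev_node: "x \<in> V \<Longrightarrow> tree_lev (node x) = lv x"
  unfolding tree_lev_def using sphere_rel_inv_into_node by (simp add: sphere_rel_def)

lemma tree_par_node:
  assumes "x \<in> V" "E x y" "Suc (lv y) = lv x"
  shows "tree_par (node x) = node y"
proof -
  define x0 where "x0 = inv_into V node (node x)"
  have s: "sphere_rel x0 x" using sphere_rel_inv_into_node assms(1) x0_def by simp
  then have x0: "x0 \<in> V" "lv x0 = lv x" by (simp_all add: sphere_rel_def)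
  then have "sphere_rel (pred x0) y" using sphere_rel_down[OF s] pred_spec assms by simp
  then have "node (pred x0) = node y" using node_eq_iff sphere_rel_def by blast
  then show ?thesis unfolding tree_par_def x0_def[symmetric] using x0 assms(3) by simp
qed

sublocale T: parent_tree VT tree_lev tree_par "node root"
proof
  show "node root \<in> VT" using root_in by simp
  show "tree_lev (node root) = 0" using tree_lev_node root_in by simp
  then show "tree_par (node root) = node root" unfolding tree_par_def tree_lev_def by simp
  fix u assume u: "u \<in> VT"
  then have x: "inv_into V node u \<in> V" "node (inv_into V node u) = u"
    by (auto simp: inv_into_into f_inv_into_f)
  show "tree_par u \<in> VT" using pred_in x u unfolding tree_par_def by auto
  show "tree_lev u = 0 \<Longrightarrow> u = node root"
    using gdist_eq_0D[OF root_in x(1)] x(2) unfolding tree_lev_def by auto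
  show "Suc (tree_lev (tree_par u)) = tree_lev u" if pos: "0 < tree_lev u"
  proof -
    have "tree_par u = node (pred (inv_into V node u))"
      using pos unfolding tree_par_def tree_lev_def by simp
    then have "tree_lev (tree_par u) = lv (pred (inv_into V node u))"
      using tree_lev_node pred_in x(1) pos by (simp add: tree_lev_def)
    then show ?thesis using pred_spec(2)[OF x(1)] pos by (simp add: tree_lev_def)
  qed
qed

sublocale TG: connected_graph VT T.parent_edge
  by (rule T.connected_graph_parent_edge)

abbreviation tdist :: "nat \<Rightarrow> nat \<Rightarrow> nat" where "tdist \<equiv> graph_dist VT T.parent_edge"

lemma node_edge: "E x y \<Longrightarrow> node x = node y \<or> T.parent_edge (node x) (node y)"
proof -
  assume e: "E x y"
  have xy: "x \<in> V" "y \<in> V" using edge_vertices e by auto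
  consider "lv x = lv y" | "Suc (lv x) = lv y" | "Suc (lv y) = lv x"
    using lv_edge_le[OF e] lv_edge_le[OF sym[OF e]] by linarith
  then show ?thesis
  proof cases
    case 1
    then show ?thesis using node_eq_iff xy sphere_rel_edge[OF e] by blast
  next
    case 2
    then have "T.parent_edge (node y) (node x)"
      using tree_par_node[OF xy(2) sym[OF e]] tree_lev_node xy unfolding T.parent_edge_def by simp
    then show ?thesis using T.parent_edge_sym by blast
  next
    case 3
    then show ?thesis
      using tree_par_node[OF xy(1) e] tree_lev_node xy unfolding T.parent_edge_def by simp
  qed
qed

lemma tdist_node_le: "walk_betw V E xs x y \<Longrightarrow> tdist (node x) (node y) \<le> length xs - 1"
proof (induction xs arbitrary: x rule: induct_list012)
  case (2 z)
  then show ?case by simp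
next
  case (3 z z' zs)
  then have e: "E x z'" and w: "walk_betw V E (z' # zs) z' y" by (auto simp: walk_betw_def)
  have V: "x \<in> V" "z' \<in> V" "y \<in> V" using edge_vertices[OF e] walk_betw_in[OF w] by auto
  have "tdist (node x) (node z') \<le> 1" using node_edge[OF e] TG.gdist_edge V by fastforce
  moreover have "tdist (node z') (node y) \<le> length zs" using "3.IH"(2)[OF w] by simp
  ultimately show ?case using TG.gdist_triangle[of "node x" "node z'" "node y"] V by simp
qed (simp add: walk_betw_def)

lemma gdist_parent_edge_le:
  assumes "T.parent_edge (node x) (node x')" "x \<in> V" "x' \<in> V"
  shows "gdist x x' \<le> 4 * \<Delta> + 3"
proof -
  have one_way: "gdist x x' \<le> 4 * \<Delta> + 3"
    if e: "0 < tree_lev (node x)" "node x' = tree_par (node x)" and V: "x \<in> V" "x' \<in> V" for x x'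
  proof -
    have pos: "0 < lv x" using e tree_lev_node V by simp
    have pV: "pred x \<in> V" using pred_in V pos by simp
    have "node x' = node (pred x)" using e tree_par_node[OF V(1) pred_spec[OF V(1) pos]] by simp
    then have "gdist (pred x) x' \<le> 4 * \<Delta> + 2"
      using node_eq_iff V pV sphere_rel_gdist sphere_rel_sym by metis
    moreover have "gdist x (pred x) \<le> 1" using gdist_edge pred_spec V pos by blast
    ultimately show ?thesis using gdist_triangle[OF V(1) pV V(2)] by simp
  qed
  show ?thesis
    using assms one_way[of x x'] one_way[of x' x] gdist_commute unfolding T.parent_edge_def by auto
qed

lemma gdist_le_tree_walk:
  "walk_betw VT T.parent_edge ys (node x) (node y) \<Longrightarrow> x \<in> V \<Longrightarrow> y \<in> V \<Longrightarrow>
     gdist x y \<le> (4 * \<Delta> + 3) * (length ys - 1) + (4 * \<Delta> + 2)"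
proof (induction ys arbitrary: x rule: induct_list012)
  case (2 z)
  then have "sphere_rel x y" using node_eq_iff[of x y] by auto
  then show ?case using sphere_rel_gdist by simp
next
  case (3 z z' zs)
  then have e: "T.parent_edge (node x) z'" and w: "walk_betw VT T.parent_edge (z' # zs) z' (node y)"
    by (auto simp: walk_betw_def)
  obtain x' where x': "x' \<in> V" "node x' = z'" using walk_betw_in[OF w] by blast
  have "gdist x' y \<le> (4 * \<Delta> + 3) * length zs + (4 * \<Delta> + 2)" using "3.IH"(2) w x' "3.prems" by simp
  moreover have "gdist x x' \<le> 4 * \<Delta> + 3" using gdist_parent_edge_le e "3.prems" x' by simp
  ultimately show ?case using gdist_triangle[of x x' y] "3.prems" x' by simp
qed (simp add: walk_betw_def)

theorem quasi_isometric_tree: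
  "quasi_isometric V (\<lambda>x y. real (gdist x y)) VT (\<lambda>u v. real (tdist u v))"
proof (rule quasi_isometric_natI[where f = node and C = "4 * \<Delta> + 3"])
  fix x y assume xy: "x \<in> V" "y \<in> V"
  obtain xs where xs: "walk_betw V E xs x y" "length xs = Suc (gdist x y)"
    using shortest_walk_exists xy by blast
  have "tdist (node x) (node y) \<le> gdist x y" using tdist_node_le[OF xs(1)] xs(2) by simp
  then show "tdist (node x) (node y) \<le> (4 * \<Delta> + 3) * gdist x y + (4 * \<Delta> + 3)"
    by (simp add: add_mult_distrib)
  obtain ys where ys: "walk_betw VT T.parent_edge ys (node x) (node y)"
    "length ys = Suc (tdist (node x) (node y))"
    using TG.shortest_walk_exists xy by blast
  show "gdist x y \<le> (4 * \<Delta> + 3) * tdist (node x) (node y) + (4 * \<Delta> + 3)"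
    using gdist_le_tree_walk[OF ys(1) xy] ys(2) by simp
next
  fix z assume "z \<in> VT"
  then obtain x where "x \<in> V" "z = node x" by blast
  moreover have "tdist (node x) (node x) = 0" using \<open>x \<in> V\<close> by simp
  ultimately show "\<exists>x\<in>V. tdist z (node x) \<le> 4 * \<Delta> + 3" by (intro bexI[of _ x]) auto
qed auto

end

section \<open>Cycles through a point avoided by a walk\<close>

text \<open>The numerical side of chordality: positions \<open>i - 1\<close> and \<open>j\<close> of a closed walk of length \<open>n\<close>
  are joined by a path of length \<open>r \<le> min m (j - i) (n - j + i - 2)\<close>.\<close>
definition short_chord :: "nat \<Rightarrow> nat \<Rightarrow> nat \<Rightarrow> nat \<Rightarrow> nat \<Rightarrow> nat \<Rightarrow> bool" where
  "short_chord i0 m n i j r \<longleftrightarrow>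
     1 \<le> i \<and> i \<le> i0 \<and> i < j \<and> j \<le> n \<and> r \<le> m \<and> r \<le> j - i \<and> r + j + 2 \<le> n + i"

lemma short_chord_mono: "short_chord i0 m n i j r \<Longrightarrow> r' \<le> r \<Longrightarrow> short_chord i0 m n i j r'"
  by (simp add: short_chord_def)

context connected_graph
begin

lemma detour_avoiding_ball:
  assumes \<gamma>: "walk_betw V E \<gamma> x y" "length \<gamma> = Suc (gdist x y)" "\<gamma> ! a = w"
    and a: "\<Delta> < a" "a + \<Delta> < gdist x y" "0 < \<Delta>"
    and P: "walk_betw V E P x y" "\<forall>p\<in>set P. \<Delta> < gdist p w"
  obtains mid where "walk_betw V E (\<gamma> ! (a + \<Delta>) # mid @ [\<gamma> ! (a - \<Delta>)]) (\<gamma> ! (a + \<Delta>)) (\<gamma> ! (a - \<Delta>))"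
    "distinct (\<gamma> ! (a + \<Delta>) # mid @ [\<gamma> ! (a - \<Delta>)])" "\<forall>z\<in>set mid. \<Delta> < gdist z w"
proof -
  note d\<gamma> = shortest_walk_gdist[OF \<gamma>(1,2)]
  define Q where "Q = (drop (a + \<Delta>) \<gamma> @ tl (rev P)) @ tl (take (Suc (a - \<Delta>)) \<gamma>)"
  have w1: "walk_betw V E (drop (a + \<Delta>) \<gamma>) (\<gamma> ! (a + \<Delta>)) y"
    using walk_betw_drop[OF \<gamma>(1), of "a + \<Delta>"] \<gamma>(2) a by simp
  have w3: "walk_betw V E (take (Suc (a - \<Delta>)) \<gamma>) x (\<gamma> ! (a - \<Delta>))"
    using walk_betw_take[OF \<gamma>(1), of "a - \<Delta>"] \<gamma>(2) a by simp
  have Q: "walk_betw V E Q (\<gamma> ! (a + \<Delta>)) (\<gamma> ! (a - \<Delta>))"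
    unfolding Q_def by (rule walk_betw_append[OF walk_betw_append[OF w1 walk_betw_rev[OF sym P(1)]] w3])
  have "\<gamma> ! (a + \<Delta>) \<noteq> \<gamma> ! (a - \<Delta>)"
    using shortest_walk_distinct[OF \<gamma>(1,2)] \<gamma>(2) a by (simp add: nth_eq_iff_index_eq)
  moreover have "z = \<gamma> ! (a - \<Delta>) \<or> z = \<gamma> ! (a + \<Delta>)" if z: "z \<in> set Q" "z \<in> {z. gdist z w \<le> \<Delta>}" for z
  proof -
    have "z \<in> set (drop (a + \<Delta>) \<gamma>) \<or> z \<in> set P \<or> z \<in> set (take (Suc (a - \<Delta>)) \<gamma>)"
      using z(1) set_tl_subset[of "rev P"] set_tl_subset[of "take (Suc (a - \<Delta>)) \<gamma>"]
      unfolding Q_def by auto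
    then show ?thesis
    proof (elim disjE)
      assume "z \<in> set (drop (a + \<Delta>) \<gamma>)"
      then obtain t where "t < length \<gamma> - (a + \<Delta>)" "z = \<gamma> ! (a + \<Delta> + t)"
        by (auto simp: in_set_conv_nth)
      then show ?thesis using d\<gamma>(2)[of a "a + \<Delta> + t"] \<gamma>(2,3) z(2) by auto
    next
      assume "z \<in> set (take (Suc (a - \<Delta>)) \<gamma>)"
      then obtain t where "t < Suc (a - \<Delta>)" "z = \<gamma> ! t" by (auto simp: in_set_conv_nth)
      moreover have "gdist (\<gamma> ! t) w = a - t"
        using d\<gamma>(1)[of t a] \<gamma>(2,3) a \<open>t < Suc (a - \<Delta>)\<close> by simp
      ultimately have "t = a - \<Delta>" using z(2) by simp
      then show ?thesis using \<open>z = \<gamma> ! t\<close> by simp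
    qed (use P(2) z in force)
  qed
  ultimately obtain mid where "walk_betw V E (\<gamma> ! (a + \<Delta>) # mid @ [\<gamma> ! (a - \<Delta>)]) (\<gamma> ! (a + \<Delta>)) (\<gamma> ! (a - \<Delta>))"
    "distinct (\<gamma> ! (a + \<Delta>) # mid @ [\<gamma> ! (a - \<Delta>)])" "set mid \<inter> {z. gdist z w \<le> \<Delta>} = {}"
    using walk_betw_distinct_interior[OF Q] by blast
  then show ?thesis using that by fastforce
qed

text \<open>The cycle follows the geodesic for \<open>\<Delta>\<close> steps on either side of \<open>w\<close> and is closed by a
  loop-erased detour along the avoiding walk.\<close>
lemma bypass_cycle:
  assumes "between x w y" and P: "walk_betw V E P x y" "\<forall>p\<in>set P. \<Delta> < gdist p w"
    and "0 < \<Delta>"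
  obtains W where "walk_betw V E W w w" "distinct (butlast W)" "2 * \<Delta> + 1 \<le> length W - 1"
    "\<And>s t. s \<le> t \<Longrightarrow> t \<le> \<Delta> \<Longrightarrow> gdist (W ! s) (W ! t) = t - s"
    "\<And>s t. s \<le> \<Delta> \<Longrightarrow> t \<le> \<Delta> \<Longrightarrow> gdist (W ! s) (W ! (length W - 1 - t)) = s + t"
    "\<And>t. \<Delta> < t \<Longrightarrow> t + \<Delta> < length W - 1 \<Longrightarrow> \<Delta> < gdist (W ! t) w"
proof -
  have xy: "x \<in> V" "y \<in> V" and wV: "w \<in> V"
    using walk_betw_in[OF P(1)] assms(1) by (auto simp: between_def)
  define a where "a = gdist x w"
  obtain \<gamma> where \<gamma>: "walk_betw V E \<gamma> x y" "length \<gamma> = Suc (gdist x y)" "\<gamma> ! a = w"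
    using between_shortest_walk_exists[OF assms(1) xy] a_def by blast
  note d\<gamma> = shortest_walk_gdist[OF \<gamma>(1,2)]
  have aD: "\<Delta> < a" and bD: "a + \<Delta> < gdist x y"
    using P(2) walk_betw_endpoints[OF P(1)] assms(1) gdist_commute[OF wV xy(2)]
    unfolding a_def between_def by auto
  obtain mid where Q: "walk_betw V E (\<gamma> ! (a + \<Delta>) # mid @ [\<gamma> ! (a - \<Delta>)]) (\<gamma> ! (a + \<Delta>)) (\<gamma> ! (a - \<Delta>))"
    "distinct (\<gamma> ! (a + \<Delta>) # mid @ [\<gamma> ! (a - \<Delta>)])" and far: "\<forall>z\<in>set mid. \<Delta> < gdist z w"
    using detour_avoiding_ball[OF \<gamma> aD bD \<open>0 < \<Delta>\<close> P] by blast
  define W1 W3 where "W1 = drop a (take (Suc (a + \<Delta>)) \<gamma>)" and "W3 = drop (a - \<Delta>) (take (Suc a) \<gamma>)"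
  have W1: "length W1 = Suc \<Delta>" "\<And>t. t \<le> \<Delta> \<Longrightarrow> W1 ! t = \<gamma> ! (a + t)"
    and W3: "length W3 = Suc \<Delta>" "\<And>t. t \<le> \<Delta> \<Longrightarrow> W3 ! t = \<gamma> ! (a - \<Delta> + t)"
    using \<gamma>(2) aD bD unfolding W1_def W3_def by auto
  have wW1: "walk_betw V E W1 w (\<gamma> ! (a + \<Delta>))" and wW3: "walk_betw V E W3 (\<gamma> ! (a - \<Delta>)) w"
    using walk_betw_drop[OF walk_betw_take[OF \<gamma>(1), of "a + \<Delta>"], of a]
      walk_betw_drop[OF walk_betw_take[OF \<gamma>(1), of a], of "a - \<Delta>"] \<gamma>(2,3) aD bD
    unfolding W1_def W3_def by simp_all
  have "\<gamma> ! (a - \<Delta>) # tl W3 = W3" using wW3 W3(1) by (cases W3) (auto simp: walk_betw_def)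
  then have "walk_betw V E (W1 @ mid @ W3) w w"
    using walk_betw_append[OF walk_betw_append[OF wW1 Q(1)] wW3] by simp
  define W where "W = W1 @ mid @ W3"
  note pos = nth_append_segments[OF W1(1) W3(1), of _ mid, folded W_def]
  have near: "gdist z w \<le> \<Delta>" if z: "z \<in> set W1 \<union> set W3" for z
  proof -
    obtain t where "t \<le> \<Delta>" "z = W1 ! t \<or> z = W3 ! t"
      using z W1(1) W3(1) by (auto simp: in_set_conv_nth less_Suc_eq_le)
    then show ?thesis using W1(2) W3(2) d\<gamma>(1)[of "a - \<Delta> + t" a] d\<gamma>(2)[of a "a + t"] \<gamma>(2,3) aD bD by auto
  qed
  have "distinct (take a \<gamma> @ W1)" "distinct (drop (a - \<Delta>) (take a \<gamma>))"
    using shortest_walk_distinct[OF \<gamma>(1,2)] append_take_drop_id[of a "take (Suc (a + \<Delta>)) \<gamma>"]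
    unfolding W1_def by (metis distinct_take min.absorb1 le_add1 le_SucI take_take distinct_drop)+
  moreover have "butlast W3 = drop (a - \<Delta>) (take a \<gamma>)"
    using \<gamma>(2) bD unfolding W3_def by (simp add: butlast_drop butlast_take)
  moreover have "butlast W = W1 @ mid @ butlast W3"
    using W3(1) unfolding W_def by (cases W3) (simp_all add: butlast_append)
  ultimately have "distinct (butlast W)"
    using Q(2) far near set_drop_subset[of "a - \<Delta>" "take a \<gamma>"] in_set_butlastD[of _ W3] by fastforce
  moreover have "gdist (W ! s) (W ! t) = t - s" if "s \<le> t" "t \<le> \<Delta>" for s t
    using pos(1) W1(2) d\<gamma>(1)[of "a + s" "a + t"] \<gamma>(2) that bD by simp
  moreover have "gdist (W ! s) (W ! (length W - 1 - t)) = s + t" if "s \<le> \<Delta>" "t \<le> \<Delta>" for s t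
    using pos(1,3) W1(2) W3(2)[of "\<Delta> - t"] d\<gamma>(2)[of "a - t" "a + s"] \<gamma>(2) that aD bD by simp
  moreover have "\<Delta> < gdist (W ! t) w" if "\<Delta> < t" "t + \<Delta> < length W - 1" for t
    using far pos(2) that by blast
  moreover have "2 * \<Delta> + 1 \<le> length W - 1" using W1(1) W3(1) unfolding W_def by simp
  ultimately show ?thesis using that \<open>walk_betw V E (W1 @ mid @ W3) w w\<close> unfolding W_def by blast
qed

lemma bypass_cycle_no_short_chord:
  assumes W: "walk_betw V E W w w"
    and geo: "\<And>s t. s \<le> t \<Longrightarrow> t \<le> \<Delta> \<Longrightarrow> gdist (W ! s) (W ! t) = t - s"
    and geo': "\<And>s t. s \<le> \<Delta> \<Longrightarrow> t \<le> \<Delta> \<Longrightarrow> gdist (W ! s) (W ! (length W - 1 - t)) = s + t"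
    and far: "\<And>t. \<Delta> < t \<Longrightarrow> t + \<Delta> < length W - 1 \<Longrightarrow> \<Delta> < gdist (W ! t) w"
    and "i0 + m < \<Delta>"
  shows "\<not> short_chord i0 m (length W - 1) i j (gdist (W ! (i - 1)) (W ! j))"
proof
  define n where "n = length W - 1"
  assume "short_chord i0 m (length W - 1) i j (gdist (W ! (i - 1)) (W ! j))"
  then have ij: "1 \<le> i" "i \<le> i0" "i < j" "j \<le> n" and d: "gdist (W ! (i - 1)) (W ! j) \<le> m"
    "gdist (W ! (i - 1)) (W ! j) \<le> j - i" "gdist (W ! (i - 1)) (W ! j) + j + 2 \<le> n + i"
    unfolding short_chord_def n_def by auto
  consider "j \<le> \<Delta>" | "\<Delta> < j" "j + \<Delta> < n" | "n \<le> j + \<Delta>" by linarith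
  then show False
  proof cases
    case 1
    then show False using geo[of "i - 1" j] d(2) ij by simp
  next
    case 2
    have W_in: "W ! (i - 1) \<in> V" "W ! j \<in> V"
      using walk_betw_set[OF W] nth_mem[of "i - 1" W] nth_mem[of j W] ij unfolding n_def by auto
    have "W ! 0 = w" using W walk_betw_nonempty[OF W] by (simp add: walk_betw_def hd_conv_nth)
    then have "gdist (W ! (i - 1)) w = i - 1"
      using geo[of 0 "i - 1"] gdist_commute W_in walk_betw_in[OF W] ij \<open>i0 + m < \<Delta>\<close> by simp
    then have "gdist (W ! j) w \<le> m + (i - 1)"
      using gdist_triangle[of "W ! j" "W ! (i - 1)" w] gdist_commute[of "W ! j" "W ! (i - 1)"]
        d(1) W_in walk_betw_in[OF W] by simp
    then show False using far[of j] 2 ij \<open>i0 + m < \<Delta>\<close> unfolding n_def by simp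
  next
    case 3
    then have "gdist (W ! (i - 1)) (W ! j) = i - 1 + (n - j)"
      using geo'[of "i - 1" "n - j"] ij \<open>i0 + m < \<Delta>\<close> unfolding n_def by simp
    then show False using d(3) ij by simp
  qed
qed

end

section \<open>Cayley graphs\<close>

lemma word_prod_Nil [simp]: "word_prod G [] = \<one>\<^bsub>G\<^esub>"
  by (simp add: word_prod_def)

lemma word_prod_Cons [simp]: "word_prod G (x # xs) = x \<otimes>\<^bsub>G\<^esub> word_prod G xs"
  by (simp add: word_prod_def)

locale cayley = group G for G :: "('g, 'b) monoid_scheme" (structure) +
  fixes S :: "'g set"
  assumes finite_S: "finite S" and S_carrier: "S \<subseteq> carrier G"
    and generate_S: "generate G S = carrier G"
begin

abbreviation gens :: "'g set" where "gens \<equiv> sym_gens G S"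

lemma gens_carrier: "gens \<subseteq> carrier G"
  using S_carrier by (auto simp: sym_gens_def)

lemma inv_gens: "s \<in> gens \<Longrightarrow> inv s \<in> gens"
  using S_carrier by (auto simp: sym_gens_def)

lemma word_prod_closed: "set ws \<subseteq> carrier G \<Longrightarrow> word_prod G ws \<in> carrier G"
  by (induction ws) auto

lemma word_prod_append:
  "set xs \<subseteq> carrier G \<Longrightarrow> set ys \<subseteq> carrier G \<Longrightarrow> word_prod G (xs @ ys) = word_prod G xs \<otimes> word_prod G ys"
  by (induction xs) (auto simp: word_prod_closed m_assoc)

lemma word_prod_gens_closed: "set ws \<subseteq> gens \<Longrightarrow> word_prod G ws \<in> carrier G"
  using gens_carrier word_prod_closed by blast

lemma word_exists: "g \<in> carrier G \<Longrightarrow> \<exists>ws. set ws \<subseteq> gens \<and> word_prod G ws = g"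
proof -
  assume "g \<in> carrier G"
  then have "g \<in> generate G S" using generate_S by simp
  then show ?thesis
  proof (induction rule: generate.induct)
    case one
    show ?case by (intro exI[of _ "[]"]) simp
  next
    case (incl h)
    show ?case
    proof (cases "h = \<one>")
      case False
      then show ?thesis using incl S_carrier by (intro exI[of _ "[h]"]) (auto simp: sym_gens_def)
    qed (auto intro: exI[of _ "[]"])
  next
    case (inv h)
    show ?case
    proof (cases "inv h = \<one>")
      case False
      then show ?thesis using inv S_carrier by (intro exI[of _ "[inv h]"]) (auto simp: sym_gens_def)
    qed (auto intro: exI[of _ "[]"])
  next
    case (eng h1 h2)
    then obtain w1 w2 where "set w1 \<subseteq> gens" "word_prod G w1 = h1" "set w2 \<subseteq> gens" "word_prod G w2 = h2"
      by blast
    then show ?case using gens_carrier by (intro exI[of _ "w1 @ w2"]) (auto simp: word_prod_append)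
  qed
qed

definition adj :: "'g \<Rightarrow> 'g \<Rightarrow> bool" where
  "adj x y \<longleftrightarrow> x \<in> carrier G \<and> (\<exists>s\<in>gens. y = x \<otimes> s)"

lemma adj_carrier: "adj x y \<Longrightarrow> x \<in> carrier G \<and> y \<in> carrier G"
  using gens_carrier by (auto simp: adj_def)

lemma adj_sym: "adj x y \<Longrightarrow> adj y x"
proof -
  assume "adj x y"
  then obtain s where s: "x \<in> carrier G" "s \<in> gens" "y = x \<otimes> s" by (auto simp: adj_def)
  then have "s \<in> carrier G" using gens_carrier by auto
  then have "y \<otimes> inv s = x" using s by (simp add: m_assoc)
  then show "adj y x" using s \<open>s \<in> carrier G\<close> inv_gens unfolding adj_def by (metis m_closed)
qed

fun word_walk :: "'g \<Rightarrow> 'g list \<Rightarrow> 'g list" where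
  "word_walk g [] = [g]"
| "word_walk g (s # ws) = g # word_walk (g \<otimes> s) ws"

lemma length_word_walk [simp]: "length (word_walk g ws) = Suc (length ws)"
  by (induction ws arbitrary: g) auto

lemma walk_betw_word_walk:
  "g \<in> carrier G \<Longrightarrow> set ws \<subseteq> gens \<Longrightarrow>
     walk_betw (carrier G) adj (word_walk g ws) g (g \<otimes> word_prod G ws)"
proof (induction ws arbitrary: g)
  case (Cons s ws)
  then have s: "s \<in> carrier G" "adj g (g \<otimes> s)" using gens_carrier by (auto simp: adj_def)
  have "walk_betw (carrier G) adj (word_walk (g \<otimes> s) ws) (g \<otimes> s) (g \<otimes> s \<otimes> word_prod G ws)"
    using Cons s by simp
  moreover have "g \<otimes> s \<otimes> word_prod G ws = g \<otimes> word_prod G (s # ws)"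
    using Cons s word_prod_gens_closed[of ws] by (simp add: m_assoc)
  ultimately show ?case using walk_betw_Cons[where E = adj, OF _ s(2)] Cons.prems by simp
qed simp

lemma walk_betw_word:
  "walk_betw (carrier G) adj xs g h \<Longrightarrow>
     \<exists>ws. length ws = length xs - 1 \<and> set ws \<subseteq> gens \<and> g \<otimes> word_prod G ws = h"
proof (induction xs arbitrary: g rule: induct_list012)
  case (2 x) then show ?case by (intro exI[of _ "[]"]) simp
next
  case (3 x y zs)
  then have "adj g y" "g \<in> carrier G" by (auto simp: walk_betw_def dest: adj_carrier)
  then obtain s where s: "s \<in> gens" "y = g \<otimes> s" by (auto simp: adj_def)
  obtain ws where ws: "length ws = length zs" "set ws \<subseteq> gens" "y \<otimes> word_prod G ws = h"
    using "3.IH"(2) walk_betw_ConsD[OF "3.prems"] by fastforce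
  then have "g \<otimes> word_prod G (s # ws) = h"
    using s \<open>g \<in> carrier G\<close> gens_carrier word_prod_gens_closed by (auto simp: m_assoc)
  then show ?case using ws s by (intro exI[of _ "s # ws"]) auto
qed (simp add: walk_betw_def)

sublocale X: connected_graph "carrier G" adj
proof
  fix g h assume gh: "g \<in> carrier G" "h \<in> carrier G"
  obtain ws where ws: "set ws \<subseteq> gens" "word_prod G ws = inv g \<otimes> h" using word_exists gh by blast
  have "g \<otimes> (inv g \<otimes> h) = h" using gh by (simp add: m_assoc[symmetric])
  then show "\<exists>xs. walk_betw (carrier G) adj xs g h" using walk_betw_word_walk[OF gh(1) ws(1)] ws(2) by auto
qed (auto intro: adj_sym dest: adj_carrier)

lemma cayley_dist_eq_gdist: "g \<in> carrier G \<Longrightarrow> cayley_dist G S g h = X.gdist g h"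
proof -
  assume g: "g \<in> carrier G"
  have "(\<exists>ws. length ws = n \<and> set ws \<subseteq> gens \<and> g \<otimes> word_prod G ws = h) \<longleftrightarrow>
        (\<exists>xs. is_walk (carrier G) adj xs \<and> hd xs = g \<and> last xs = h \<and> length xs = Suc n)" for n
  proof
    assume "\<exists>ws. length ws = n \<and> set ws \<subseteq> gens \<and> g \<otimes> word_prod G ws = h"
    then obtain ws where "length ws = n" "set ws \<subseteq> gens" "g \<otimes> word_prod G ws = h" by blast
    then show "\<exists>xs. is_walk (carrier G) adj xs \<and> hd xs = g \<and> last xs = h \<and> length xs = Suc n"
      using walk_betw_word_walk[OF g] unfolding walk_betw_def by (intro exI[of _ "word_walk g ws"]) auto
  next
    assume "\<exists>xs. is_walk (carrier G) adj xs \<and> hd xs = g \<and> last xs = h \<and> length xs = Suc n"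
    then obtain xs where "walk_betw (carrier G) adj xs g h" "length xs = Suc n"
      unfolding walk_betw_def by blast
    then show "\<exists>ws. length ws = n \<and> set ws \<subseteq> gens \<and> g \<otimes> word_prod G ws = h"
      using walk_betw_word by fastforce
  qed
  then show ?thesis unfolding cayley_dist_def graph_dist_def by simp
qed

lemma gdist_le_word:
  "g \<in> carrier G \<Longrightarrow> set ws \<subseteq> gens \<Longrightarrow> g \<otimes> word_prod G ws = h \<Longrightarrow> X.gdist g h \<le> length ws"
  using X.gdist_le_walk[OF walk_betw_word_walk] by fastforce

lemma gdist_mult_left:
  assumes "a \<in> carrier G" "x \<in> carrier G" "y \<in> carrier G"
  shows "X.gdist (a \<otimes> x) (a \<otimes> y) = X.gdist x y"
proof -
  have "set ws \<subseteq> gens \<Longrightarrow> (a \<otimes> x) \<otimes> word_prod G ws = a \<otimes> y \<longleftrightarrow> x \<otimes> word_prod G ws = y" for ws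
    using assms word_prod_gens_closed by (simp add: m_assoc)
  then have "cayley_dist G S (a \<otimes> x) (a \<otimes> y) = cayley_dist G S x y"
    unfolding cayley_dist_def by (simp cong: conj_cong)
  then show ?thesis using cayley_dist_eq_gdist assms by simp
qed

lemma countable_carrier: "countable (carrier G)"
proof -
  have "carrier G \<subseteq> word_prod G ` lists gens" using word_exists by fastforce
  moreover have "countable (word_prod G ` lists gens)"
    using finite_S by (intro countable_image countable_lists countable_finite) (simp add: sym_gens_def)
  ultimately show ?thesis by (rule countable_subset)
qed

section \<open>Chordality\<close>

definition prefix_prod :: "'g list \<Rightarrow> nat \<Rightarrow> 'g" where
  "prefix_prod ss t = word_prod G (take t ss)"

lemma prefix_prod_closed: "set ss \<subseteq> gens \<Longrightarrow> prefix_prod ss t \<in> carrier G"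
  unfolding prefix_prod_def using set_take_subset word_prod_gens_closed by (meson order_trans)

lemma prefix_prod_0 [simp]: "prefix_prod ss 0 = \<one>"
  by (simp add: prefix_prod_def)

lemma prefix_prod_Suc:
  assumes "set ss \<subseteq> gens" "t < length ss"
  shows "prefix_prod ss (Suc t) = prefix_prod ss t \<otimes> ss ! t"
proof -
  have "set (take t ss) \<subseteq> carrier G" using assms(1) gens_carrier by (meson order_trans set_take_subset)
  moreover have "ss ! t \<in> carrier G" using assms gens_carrier nth_mem by blast
  ultimately show ?thesis
    using assms by (simp add: prefix_prod_def take_Suc_conv_app_nth word_prod_append)
qed

lemma gdist_prefix_prod_Suc:
  assumes "set ss \<subseteq> gens" "t < length ss"
  shows "X.gdist (prefix_prod ss t) (prefix_prod ss (Suc t)) \<le> 1"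
proof (rule X.gdist_edge)
  have "ss ! t \<in> gens" using assms nth_mem by blast
  then show "adj (prefix_prod ss t) (prefix_prod ss (Suc t))"
    unfolding adj_def prefix_prod_Suc[OF assms] using prefix_prod_closed[OF assms(1)] by blast
qed

lemma word_prod_subword:
  assumes "set ss \<subseteq> gens" "1 \<le> i" "i \<le> j" "j \<le> length ss"
  shows "word_prod G (subword ss i j) = inv (prefix_prod ss (i - 1)) \<otimes> prefix_prod ss j"
proof -
  have "j = (i - 1) + (Suc j - i)" using assms by simp
  then have "take j ss = take (i - 1) ss @ subword ss i j"
    unfolding subword_def by (metis take_add)
  moreover have "set (take (i - 1) ss) \<subseteq> carrier G" "set (subword ss i j) \<subseteq> carrier G"
    using assms(1) gens_carrier unfolding subword_def by (meson order_trans set_take_subset set_drop_subset)+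
  ultimately have "prefix_prod ss j = prefix_prod ss (i - 1) \<otimes> word_prod G (subword ss i j)"
    by (simp add: prefix_prod_def word_prod_append)
  then show ?thesis
    using word_prod_closed \<open>set (take (i - 1) ss) \<subseteq> carrier G\<close> \<open>set (subword ss i j) \<subseteq> carrier G\<close>
    by (simp add: prefix_prod_def m_assoc[symmetric])
qed

lemma subword_short_chord_iff:
  assumes ss: "set ss \<subseteq> gens"
  shows "(\<exists>ts. set ts \<subseteq> gens \<and> word_prod G (subword ss i j) = word_prod G ts \<and>
            short_chord i0 m (length ss) i j (length ts))
      \<longleftrightarrow> short_chord i0 m (length ss) i j (X.gdist (prefix_prod ss (i - 1)) (prefix_prod ss j))"
proof (cases "1 \<le> i \<and> i < j \<and> j \<le> length ss")
  case True
  let ?a = "prefix_prod ss (i - 1)" and ?b = "prefix_prod ss j"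
  have ab: "?a \<in> carrier G" "?b \<in> carrier G" using prefix_prod_closed[OF ss] by auto
  have sub: "word_prod G (subword ss i j) = inv ?a \<otimes> ?b" using word_prod_subword[OF ss] True by simp
  have word_iff: "inv ?a \<otimes> ?b = word_prod G ts \<longleftrightarrow> ?a \<otimes> word_prod G ts = ?b" if "set ts \<subseteq> gens" for ts
    using inv_solve_left'[OF word_prod_gens_closed[OF that] ab] by auto
  show ?thesis
  proof
    assume "\<exists>ts. set ts \<subseteq> gens \<and> word_prod G (subword ss i j) = word_prod G ts \<and>
      short_chord i0 m (length ss) i j (length ts)"
    then obtain ts where "set ts \<subseteq> gens" "?a \<otimes> word_prod G ts = ?b"
      "short_chord i0 m (length ss) i j (length ts)"
      using sub word_iff by auto
    then show "short_chord i0 m (length ss) i j (X.gdist ?a ?b)"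
      using gdist_le_word[OF ab(1)] short_chord_mono by blast
  next
    assume "short_chord i0 m (length ss) i j (X.gdist ?a ?b)"
    moreover obtain xs where "walk_betw (carrier G) adj xs ?a ?b" "length xs = Suc (X.gdist ?a ?b)"
      using X.shortest_walk_exists ab by blast
    then obtain ts where "length ts = X.gdist ?a ?b" "set ts \<subseteq> gens" "?a \<otimes> word_prod G ts = ?b"
      using walk_betw_word by fastforce
    ultimately show "\<exists>ts. set ts \<subseteq> gens \<and> word_prod G (subword ss i j) = word_prod G ts \<and>
        short_chord i0 m (length ss) i j (length ts)"
      using sub word_iff by auto
  qed
qed (auto simp: short_chord_def)

lemma chordal_iff_gdist:
  "chordal G S i0 k m \<longleftrightarrow>
     (\<forall>ss. simple_relation G S ss \<longrightarrow> k \<le> length ss \<longrightarrow>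
        (\<exists>i j. short_chord i0 m (length ss) i j (X.gdist (prefix_prod ss (i - 1)) (prefix_prod ss j))))"
proof -
  have "chordal G S i0 k m \<longleftrightarrow> (\<forall>ss. simple_relation G S ss \<longrightarrow> k \<le> length ss \<longrightarrow>
      (\<exists>i j. \<exists>ts. set ts \<subseteq> gens \<and> word_prod G (subword ss i j) = word_prod G ts \<and>
        short_chord i0 m (length ss) i j (length ts)))"
    unfolding chordal_def short_chord_def by blast
  also have "\<dots> \<longleftrightarrow> (\<forall>ss. simple_relation G S ss \<longrightarrow> k \<le> length ss \<longrightarrow>
      (\<exists>i j. short_chord i0 m (length ss) i j (X.gdist (prefix_prod ss (i - 1)) (prefix_prod ss j))))"
    using subword_short_chord_iff unfolding simple_relation_def
    by (intro all_cong1 imp_cong[OF refl] ex_cong1) simp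
  finally show ?thesis .
qed

lemma mult_inv_cancel_left: "a \<in> carrier G \<Longrightarrow> b \<in> carrier G \<Longrightarrow> a \<otimes> (inv a \<otimes> b) = b"
  by (simp add: m_assoc[symmetric])

definition steps :: "'g list \<Rightarrow> 'g list" where
  "steps W = map (\<lambda>t. inv (W ! t) \<otimes> W ! Suc t) [0..<length W - 1]"

lemma length_steps [simp]: "length (steps W) = length W - 1"
  by (simp add: steps_def)

lemma walk_betw_nth:
  assumes "walk_betw (carrier G) adj W x y"
  shows "t < length W \<Longrightarrow> W ! t \<in> carrier G" and "Suc t < length W \<Longrightarrow> adj (W ! t) (W ! Suc t)"
  using assms walk_betw_set[OF assms] by (auto simp: walk_betw_def is_walk_def)

lemma steps_gens: "walk_betw (carrier G) adj W x y \<Longrightarrow> set (steps W) \<subseteq> gens"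
proof
  fix s assume W: "walk_betw (carrier G) adj W x y" and "s \<in> set (steps W)"
  then obtain t where "t < length W - 1" "s = inv (W ! t) \<otimes> W ! Suc t"
    by (auto simp: steps_def)
  then have t: "Suc t < length W" "s = inv (W ! t) \<otimes> W ! Suc t" by auto
  obtain s' where s': "s' \<in> gens" "W ! Suc t = W ! t \<otimes> s'"
    using walk_betw_nth(2)[OF W t(1)] by (auto simp: adj_def)
  have "inv (W ! t) \<otimes> W ! Suc t = s'"
    using s' gens_carrier walk_betw_nth(1)[OF W, of t] t(1) by (auto simp: m_assoc[symmetric])
  then show "s \<in> gens" using t s' by simp
qed

lemma prefix_prod_steps:
  assumes W: "walk_betw (carrier G) adj W x y"
  shows "t < length W \<Longrightarrow> prefix_prod (steps W) t = inv (W ! 0) \<otimes> W ! t"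
proof (induction t)
  case 0
  then show ?case using walk_betw_nth(1)[OF W] by simp
next
  case (Suc t)
  have W_in: "W ! 0 \<in> carrier G" "W ! t \<in> carrier G" "W ! Suc t \<in> carrier G"
    using walk_betw_nth(1)[OF W, of 0] walk_betw_nth(1)[OF W, of t] walk_betw_nth(1)[OF W, of "Suc t"]
      Suc.prems by (auto simp flip: length_greater_0_conv)
  have "prefix_prod (steps W) (Suc t) = prefix_prod (steps W) t \<otimes> (inv (W ! t) \<otimes> W ! Suc t)"
    using prefix_prod_Suc[OF steps_gens[OF W]] Suc.prems by (simp add: steps_def)
  also have "\<dots> = inv (W ! 0) \<otimes> (W ! t \<otimes> (inv (W ! t) \<otimes> W ! Suc t))"
    using Suc W_in by (simp add: m_assoc)
  also have "W ! t \<otimes> (inv (W ! t) \<otimes> W ! Suc t) = W ! Suc t"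
    by (rule mult_inv_cancel_left[OF W_in(2,3)])
  finally show ?case .
qed

lemma simple_relation_steps:
  assumes W: "walk_betw (carrier G) adj W w w" and dW: "distinct (butlast W)" and n: "2 < length W - 1"
  shows "simple_relation G S (steps W)"
  unfolding simple_relation_def
proof (intro conjI allI impI)
  define n where "n = length W - 1"
  have W_in: "W ! t \<in> carrier G" if "t \<le> n" for t using walk_betw_nth(1)[OF W] that n n_def by simp
  have ends: "W ! 0 = w" "W ! n = w"
    using W walk_betw_nonempty[OF W] by (auto simp: walk_betw_def hd_conv_nth last_conv_nth n_def)
  have pp: "prefix_prod (steps W) t = inv (W ! 0) \<otimes> W ! t" if "t \<le> n" for t
    using prefix_prod_steps[OF W] that n n_def by simp
  have neq: "W ! a \<noteq> W ! b" if "a < b" "b < n" for a b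
    using dW that nth_eq_iff_index_eq[OF dW, of a b] by (simp add: nth_butlast n_def)
  show "2 < length (steps W)" "set (steps W) \<subseteq> gens" using n steps_gens[OF W] by simp_all
  show "word_prod G (steps W) = \<one>"
    using pp[of n] ends W_in[of 0] by (simp add: prefix_prod_def n_def)
  fix p q assume pq: "1 \<le> p \<and> p \<le> q \<and> q \<le> length (steps W)"
  then have pqn: "p - 1 < q" "q \<le> n" by (auto simp: n_def)
  have "word_prod G (subword (steps W) p q) = inv (W ! (p - 1)) \<otimes> W ! q"
    using word_prod_subword[OF steps_gens[OF W]] pq pp[of "p - 1"] pp[of q] pqn W_in[of 0]
      W_in[of "p - 1"] W_in[of q] by (simp add: inv_mult_group m_assoc mult_inv_cancel_left)
  also have "\<dots> = \<one> \<longleftrightarrow> W ! (p - 1) = W ! q"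
    using W_in[of "p - 1"] W_in[of q] pqn inv_solve_left'[OF one_closed, of "W ! (p - 1)" "W ! q"] by auto
  also have "\<dots> \<longleftrightarrow> (p, q) = (1, length (steps W))"
  proof
    assume eq: "W ! (p - 1) = W ! q"
    show "(p, q) = (1, length (steps W))"
    proof (cases "q < n")
      case True then show ?thesis using neq[of "p - 1" q] eq pqn by blast
    next
      case False
      then have "q = n" using pqn by simp
      then have "p - 1 = 0" using neq[of 0 "p - 1"] eq ends pqn by (metis neq0_conv)
      then show ?thesis using \<open>q = n\<close> pq by (simp add: n_def)
    qed
  qed (use ends in \<open>simp add: n_def\<close>)
  finally show "word_prod G (subword (steps W) p q) = \<one> \<longleftrightarrow> (p, q) = (1, length (steps W))" .
qed

text \<open>Chordality is applied to the relation read off the cycle and transported back by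
  left-invariance of the word metric.\<close>
lemma chordal_cycle_chord:
  assumes "chordal G S i0 k m" and W: "walk_betw (carrier G) adj W w w" "distinct (butlast W)"
    and "k \<le> length W - 1" "2 < length W - 1"
  shows "\<exists>i j. short_chord i0 m (length W - 1) i j (X.gdist (W ! (i - 1)) (W ! j))"
proof -
  obtain i j where ij: "short_chord i0 m (length W - 1) i j
      (X.gdist (prefix_prod (steps W) (i - 1)) (prefix_prod (steps W) j))"
    using assms simple_relation_steps[OF W] unfolding chordal_iff_gdist by fastforce
  then have ij_le: "0 < length W" "i - 1 < length W" "j < length W" by (auto simp: short_chord_def)
  then have "W ! 0 \<in> carrier G" "W ! (i - 1) \<in> carrier G" "W ! j \<in> carrier G"
    using walk_betw_nth(1)[OF W(1)] by auto
  then have "X.gdist (prefix_prod (steps W) (i - 1)) (prefix_prod (steps W) j) = X.gdist (W ! (i - 1)) (W ! j)"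
    using prefix_prod_steps[OF W(1)] ij_le gdist_mult_left[OF inv_closed] by simp
  then show ?thesis using ij by auto
qed

lemma chordal_bottleneck_graph:
  assumes ch: "chordal G S i0 k m"
  shows "bottleneck_graph (carrier G) adj \<one> (k + m + i0 + 2)"
proof (intro bottleneck_graph.intro bottleneck_graph_axioms.intro)
  define \<Delta> where "\<Delta> = k + m + i0 + 2"
  show "connected_graph (carrier G) adj" by (rule X.connected_graph_axioms)
  show "\<one> \<in> carrier G" "countable (carrier G)" by (simp_all add: countable_carrier)
  fix x w y P
  assume b: "X.between x w y" and P: "walk_betw (carrier G) adj P x y"
  show "\<exists>p\<in>set P. X.gdist p w \<le> k + m + i0 + 2"
    unfolding \<Delta>_def[symmetric]
  proof (rule ccontr)
    assume "\<not> (\<exists>p\<in>set P. X.gdist p w \<le> \<Delta>)"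
    then have far: "\<forall>p\<in>set P. \<Delta> < X.gdist p w" by auto
    have "0 < \<Delta>" by (simp add: \<Delta>_def)
    obtain W where W: "walk_betw (carrier G) adj W w w" "distinct (butlast W)"
      and n: "2 * \<Delta> + 1 \<le> length W - 1"
      and cycle: "\<And>s t. s \<le> t \<Longrightarrow> t \<le> \<Delta> \<Longrightarrow> X.gdist (W ! s) (W ! t) = t - s"
        "\<And>s t. s \<le> \<Delta> \<Longrightarrow> t \<le> \<Delta> \<Longrightarrow> X.gdist (W ! s) (W ! (length W - 1 - t)) = s + t"
        "\<And>t. \<Delta> < t \<Longrightarrow> t + \<Delta> < length W - 1 \<Longrightarrow> \<Delta> < X.gdist (W ! t) w"
      using X.bypass_cycle[OF b P far \<open>0 < \<Delta>\<close>] by blast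
    have "k \<le> length W - 1" "2 < length W - 1" using n unfolding \<Delta>_def by simp_all
    then obtain i j where "short_chord i0 m (length W - 1) i j (X.gdist (W ! (i - 1)) (W ! j))"
      using chordal_cycle_chord[OF ch W] by blast
    moreover have "i0 + m < \<Delta>" by (simp add: \<Delta>_def)
    ultimately show False using X.bypass_cycle_no_short_chord[OF W(1) cycle] by blast
  qed
qed

lemma quasi_isometric_cayley_dist_iff:
  "quasi_isometric (carrier G) (\<lambda>g h. real (cayley_dist G S g h)) B dB \<longleftrightarrow>
     quasi_isometric (carrier G) (\<lambda>g h. real (X.gdist g h)) B dB"
  by (rule quasi_isometric_cong) (simp add: cayley_dist_eq_gdist)

lemma chordal_imp_qi_to_tree:
  assumes "chordal G S i0 k m"
  shows "qi_to_tree G S"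
proof -
  interpret B: bottleneck_graph "carrier G" adj \<one> "k + m + i0 + 2"
    using chordal_bottleneck_graph[OF assms] .
  have "quasi_isometric (carrier G) (\<lambda>g h. real (cayley_dist G S g h)) B.VT (\<lambda>u v. real (B.tdist u v))"
    using B.quasi_isometric_tree quasi_isometric_cayley_dist_iff by blast
  then show ?thesis using B.T.is_tree_parent_edge unfolding qi_to_tree_def by blast
qed

lemma graph_qi_tree_imp_chordal:
  assumes "graph_qi_tree (carrier G) adj VT ET f C"
  shows "\<exists>i0 k m. chordal G S i0 k m"
proof -
  interpret Q: graph_qi_tree "carrier G" adj VT ET f C by fact
  define R where "R = Q.return_bound + 2"
  have "chordal G S (R + 1) (4 * R + 1) (2 * R)"
    unfolding chordal_iff_gdist
  proof (intro allI impI)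
    fix ss assume sr: "simple_relation G S ss" and len: "4 * R + 1 \<le> length ss"
    define n where "n = length ss"
    have ss: "set ss \<subseteq> gens" using sr by (simp add: simple_relation_def)
    let ?g = "prefix_prod ss"
    have g: "\<And>t. t \<le> n \<Longrightarrow> ?g t \<in> carrier G" "\<And>t. t < n \<Longrightarrow> X.gdist (?g t) (?g (Suc t)) \<le> 1"
      using prefix_prod_closed[OF ss] gdist_prefix_prod_Suc[OF ss] unfolding n_def by auto
    have closed: "?g n = ?g 0" using sr by (simp add: simple_relation_def prefix_prod_def n_def)
    have "X.gdist (?g 0) (?g (2 * R)) \<le> 2 * R"
      using X.gdist_chain_le[of 0 "2 * R" ?g] g len unfolding n_def by simp
    then consider "X.gdist (?g 0) (?g (2 * R)) < 2 * R" | "X.gdist (?g 0) (?g (2 * R)) = 2 * R"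
      by linarith
    then show "\<exists>i j. short_chord (R + 1) (2 * R) (length ss) i j (X.gdist (?g (i - 1)) (?g j))"
    proof cases
      case 1
      then have "short_chord (R + 1) (2 * R) (length ss) 1 (2 * R) (X.gdist (?g (1 - 1)) (?g (2 * R)))"
        using len unfolding short_chord_def R_def by simp
      then show ?thesis by blast
    next
      case 2
      then obtain j where "2 * R \<le> j" "j \<le> n" "X.gdist (?g R) (?g j) \<le> Q.return_bound"
        using Q.closed_walk_returns[of n ?g R] g closed len unfolding n_def by auto
      then have "short_chord (R + 1) (2 * R) (length ss) (R + 1) j (X.gdist (?g (R + 1 - 1)) (?g j))"
        unfolding short_chord_def R_def n_def by simp
      then show ?thesis by blast
    qed
  qed
  then show ?thesis by blast
qed

lemma qi_to_tree_imp_chordal: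
  assumes "qi_to_tree G S"
  shows "\<exists>i0 k m. chordal G S i0 k m"
proof -
  obtain VT :: "nat set" and ET where tree: "is_tree VT ET"
    and "quasi_isometric (carrier G) (\<lambda>g h. real (cayley_dist G S g h)) VT (\<lambda>u v. real (graph_dist VT ET u v))"
    using assms unfolding qi_to_tree_def by blast
  then have "quasi_isometric (carrier G) (\<lambda>g h. real (X.gdist g h)) VT (\<lambda>u v. real (graph_dist VT ET u v))"
    using quasi_isometric_cayley_dist_iff by blast
  then obtain f C where "f ` carrier G \<subseteq> VT"
    and "\<And>x y. x \<in> carrier G \<Longrightarrow> y \<in> carrier G \<Longrightarrow> graph_dist VT ET (f x) (f y) \<le> C * X.gdist x y + C"
    and "\<And>x y. x \<in> carrier G \<Longrightarrow> y \<in> carrier G \<Longrightarrow> X.gdist x y \<le> C * graph_dist VT ET (f x) (f y) + C"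
    by (erule quasi_isometric_natD)
  then have "graph_qi_tree (carrier G) adj VT ET f C"
    using X.connected_graph_axioms is_tree_imp_tree[OF tree]
    by (intro graph_qi_tree.intro graph_qi_tree_axioms.intro) auto
  then show ?thesis by (rule graph_qi_tree_imp_chordal)
qed

end

theorem corollary2:
  fixes G :: "('g, 'b) monoid_scheme" and S :: "'g set"
  assumes "group G" and "finite S" and "S \<subseteq> carrier G"
    and "generate G S = carrier G"
  shows "qi_to_tree G S \<longleftrightarrow> (\<exists>i0 k m. chordal G S i0 k m)"
proof -
  interpret cayley G S using assms by (intro cayley.intro cayley_axioms.intro) auto
  show ?thesis using qi_to_tree_imp_chordal chordal_imp_qi_to_tree by blast
qed

end
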